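(* There is no injective frame $\mathcal{X}=\{x_k\}_{k=1}^\infty$ for the real or complex space $\ell_2$ such that for every real sequence $a=\{a_k\}_{k=1}^\infty\in\ell_2$ there is a Hilbert–Schmidt operator $T$ on $\ell_2$ with $\langle Tx_k,x_k\rangle=a_k$ for all $k=1,2,\dots$.
   Context: A family $\{x_k\}$ in $\ell_2$ is called injective if whenever a Hilbert–Schmidt self-adjoint operator $T$ on $\ell_2$ satisfies $\langle Tx_k,x_k\rangle=0$ for all $k$, then $T=0$. *)

theory Defs
  imports "HOL-Analysis.Analysis"
begin

text \<open>Sequences are represented as nat \<Rightarrow> complex; the real space l2 consists of the real-valued ones.\<close>

definition scalar_field :: "complex set \<Rightarrow> bool" where
  "scalar_field K \<longleftrightarrow> K = \<real> \<or> K = UNIV"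

definition l2 :: "complex set \<Rightarrow> (nat \<Rightarrow> complex) set" where
  "l2 K = {x. (\<forall>n. x n \<in> K) \<and> summable (\<lambda>n. (cmod (x n))\<^sup>2)}"

definition l2_inner :: "(nat \<Rightarrow> complex) \<Rightarrow> (nat \<Rightarrow> complex) \<Rightarrow> complex" where
  "l2_inner x y = (\<Sum>n. x n * cnj (y n))"

definition l2_norm :: "(nat \<Rightarrow> complex) \<Rightarrow> real" where
  "l2_norm x = sqrt (\<Sum>n. (cmod (x n))\<^sup>2)"

definition unit_vec :: "nat \<Rightarrow> nat \<Rightarrow> complex" where
  "unit_vec j = (\<lambda>n. if n = j then 1 else 0)"

definition bounded_op :: "complex set \<Rightarrow> ((nat \<Rightarrow> complex) \<Rightarrow> (nat \<Rightarrow> complex)) \<Rightarrow> bool" where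
  "bounded_op K T \<longleftrightarrow>
     (\<forall>x\<in>l2 K. T x \<in> l2 K) \<and>
     (\<forall>c\<in>K. \<forall>x\<in>l2 K. \<forall>y\<in>l2 K. T (\<lambda>n. c * x n + y n) = (\<lambda>n. c * T x n + T y n)) \<and>
     (\<exists>C. \<forall>x\<in>l2 K. l2_norm (T x) \<le> C * l2_norm x)"

definition hilbert_schmidt :: "complex set \<Rightarrow> ((nat \<Rightarrow> complex) \<Rightarrow> (nat \<Rightarrow> complex)) \<Rightarrow> bool" where
  "hilbert_schmidt K T \<longleftrightarrow> bounded_op K T \<and> summable (\<lambda>j. (l2_norm (T (unit_vec j)))\<^sup>2)"

definition self_adjoint_op :: "complex set \<Rightarrow> ((nat \<Rightarrow> complex) \<Rightarrow> (nat \<Rightarrow> complex)) \<Rightarrow> bool" where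
  "self_adjoint_op K T \<longleftrightarrow> (\<forall>x\<in>l2 K. \<forall>y\<in>l2 K. l2_inner (T x) y = l2_inner x (T y))"

definition is_frame :: "complex set \<Rightarrow> (nat \<Rightarrow> nat \<Rightarrow> complex) \<Rightarrow> bool" where
  "is_frame K X \<longleftrightarrow> (\<forall>k. X k \<in> l2 K) \<and>
     (\<exists>A B. 0 < A \<and> 0 < B \<and>
        (\<forall>x\<in>l2 K. summable (\<lambda>k. (cmod (l2_inner x (X k)))\<^sup>2) \<and>
            A * (l2_norm x)\<^sup>2 \<le> (\<Sum>k. (cmod (l2_inner x (X k)))\<^sup>2) \<and>
            (\<Sum>k. (cmod (l2_inner x (X k)))\<^sup>2) \<le> B * (l2_norm x)\<^sup>2))"

definition injective_family :: "complex set \<Rightarrow> (nat \<Rightarrow> nat \<Rightarrow> complex) \<Rightarrow> bool" where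
  "injective_family K X \<longleftrightarrow>
     (\<forall>T. hilbert_schmidt K T \<and> self_adjoint_op K T \<and> (\<forall>k. l2_inner (T (X k)) (X k) = 0)
          \<longrightarrow> (\<forall>x\<in>l2 K. T x = (\<lambda>n. 0)))"

end

theory Submission
  imports Defs "HOL-Library.Diagonal_Subsequence"
begin

(*
  Suppose x_k were such a frame. By the upper frame bound the coordinates x_k(j) are square
  summable in k, uniformly in j, so an averaging argument yields pairs j \<noteq> l for which the
  diagonal values phi(k) = <E x_k, x_k> of the symmetric matrix unit E = E_jl + E_lj have
  arbitrarily small l2 norm. Choosing such pairs with norm at most 8^-n, every parameter
  c : nat \<Rightarrow> real gives a square summable sequence a_c = \<Sum>_n clip(c_n) 2^n phi_n, depending
  continuously on c in the product topology, and a_c is realised by a self-adjoint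
  Hilbert-Schmidt matrix (symmetrise the given operator). Grading the parameters by the
  Hilbert-Schmidt norm of a realising matrix covers the complete metric space nat \<Rightarrow> real by
  countably many sets F_m, each closed by a weak compactness argument. By Baire, one F_m
  contains a ball, hence both updates of its centre at a far coordinate n \<ge> m to 1 and to -1.
  Half the difference of the two realising matrices realises 2^n phi_n and has squared norm at
  most m, so injectivity forces it to be 2^n E, whose squared norm 2 * 4^n exceeds m.
*)

section \<open>Unordered sums\<close>

lemma suminf_infsum:
  fixes f :: "nat \<Rightarrow> 'a::banach"
  assumes "f summable_on UNIV"
  shows "suminf f = infsum f UNIV"
  using assms has_sum_imp_sums has_sum_infsum sums_unique by metis

lemma sums_infsum:
  fixes f :: "nat \<Rightarrow> 'a::banach"
  assumes "f summable_on UNIV"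
  shows "f sums infsum f UNIV"
  using assms has_sum_imp_sums has_sum_infsum by metis

lemma summable_on_diff:
  fixes f g :: "'a \<Rightarrow> 'b::topological_ab_group_add"
  assumes "f summable_on A" "g summable_on A"
  shows "(\<lambda>x. f x - g x) summable_on A"
  using summable_on_add[OF assms(1) summable_on_uminus[THEN iffD2, OF assms(2)]] by simp

lemma infsum_diff:
  fixes f g :: "'a \<Rightarrow> 'b::{topological_ab_group_add, t2_space}"
  assumes "f summable_on A" "g summable_on A"
  shows "infsum (\<lambda>x. f x - g x) A = infsum f A - infsum g A"
  using infsum_add[OF assms(1) summable_on_uminus[THEN iffD2, OF assms(2)]]
  by (simp add: infsum_uminus)

lemma has_sum_finite_support:
  fixes f :: "'a \<Rightarrow> 'b::{topological_comm_monoid_add,t2_space}"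
  assumes "finite B" "\<And>x. x \<notin> B \<Longrightarrow> f x = 0"
  shows "(f has_sum sum f B) UNIV" "f summable_on UNIV" "infsum f UNIV = sum f B"
proof -
  show h: "(f has_sum sum f B) UNIV" by (rule has_sum_finite_neutralI) (use assms in auto)
  then show "f summable_on UNIV" by (auto simp: summable_on_def)
  show "infsum f UNIV = sum f B" using h by (rule infsumI)
qed

lemma has_sum_single:
  fixes c :: "'b::{topological_comm_monoid_add,t2_space}"
  shows "((\<lambda>n. if n = j then c else 0) has_sum c) UNIV"
    "(\<lambda>n. if n = j then c else 0) summable_on UNIV"
    "infsum (\<lambda>n. if n = j then c else 0) UNIV = c"
  using has_sum_finite_support[of "{j}" "\<lambda>n. if n = j then c else 0"] by auto

lemma infsum_of_real:
  assumes "f summable_on A"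
  shows "infsum (\<lambda>x. complex_of_real (f x)) A = complex_of_real (infsum f A)"
  using has_sum_of_real[OF has_sum_infsum[OF assms]] infsumI by blast

lemma infsum_prod_swap:
  fixes f :: "'a \<Rightarrow> 'b \<Rightarrow> 'c::{comm_monoid_add,t2_space}"
  shows "infsum (\<lambda>(i,j). f j i) UNIV = infsum (\<lambda>(i,j). f i j) UNIV"
  using infsum_reindex_bij_betw[of prod.swap UNIV UNIV "\<lambda>(i,j). f i j"]
  by (simp add: case_prod_unfold)

lemma summable_on_prod_swap:
  fixes f :: "'a \<Rightarrow> 'b \<Rightarrow> 'c::{comm_monoid_add,topological_space}"
  shows "(\<lambda>(i,j). f j i) summable_on UNIV \<longleftrightarrow> (\<lambda>(i,j). f i j) summable_on UNIV"
  using summable_on_reindex_bij_betw[of prod.swap UNIV UNIV "\<lambda>(i,j). f i j"]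
  by (simp add: case_prod_unfold)

lemma quadratic_nonneg_imp_discriminant:
  fixes F S G :: real
  assumes "\<And>t. 0 \<le> t^2 * F - 2 * t * S + G" "F \<ge> 0"
  shows "S^2 \<le> F * G"
proof (cases "F = 0")
  case True
  show ?thesis
  proof (cases "S = 0")
    case False
    have "0 \<le> ((G+1)/(2*S))^2 * F - 2 * ((G+1)/(2*S)) * S + G" by (rule assms)
    with True False show ?thesis by (simp add: field_simps)
  qed (use True in simp)
next
  case False
  with assms(2) have F: "F > 0" by simp
  have "0 \<le> (S/F)^2 * F - 2 * (S/F) * S + G" by (rule assms)
  then have "S^2/F \<le> G" using F by (simp add: power2_eq_square field_simps)
  then show ?thesis using F by (simp add: field_simps)
qed

lemma infsum_Cauchy_Schwarz_real:
  fixes f g :: "'a \<Rightarrow> real"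
  assumes f: "(\<lambda>i. (f i)^2) summable_on A" and g: "(\<lambda>i. (g i)^2) summable_on A"
  shows "(\<lambda>i. f i * g i) summable_on A"
    and "(infsum (\<lambda>i. f i * g i) A)^2 \<le> infsum (\<lambda>i. (f i)^2) A * infsum (\<lambda>i. (g i)^2) A"
proof -
  have "(\<lambda>i. ((f i)^2 + (g i)^2)/2) summable_on A"
    using summable_on_cmult_left[OF summable_on_add[OF f g], of "1/2"] by simp
  then have "(\<lambda>i. norm (f i * g i)) summable_on A"
  proof (rule summable_on_comparison_test)
    fix i show "norm (f i * g i) \<le> ((f i)^2 + (g i)^2)/2"
      using sum_squares_bound[of "\<bar>f i\<bar>" "\<bar>g i\<bar>"] by (simp add: abs_mult)
  qed simp
  then show fg: "(\<lambda>i. f i * g i) summable_on A" using summable_on_iff_abs_summable_on_real by blast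
  show "(infsum (\<lambda>i. f i * g i) A)^2 \<le> infsum (\<lambda>i. (f i)^2) A * infsum (\<lambda>i. (g i)^2) A"
  proof (rule quadratic_nonneg_imp_discriminant)
    fix t :: real
    have s1: "(\<lambda>i. t^2 * (f i)^2) summable_on A" using summable_on_cmult_right[OF f] .
    have s2: "(\<lambda>i. 2 * t * (f i * g i)) summable_on A" using summable_on_cmult_right[OF fg] .
    have "infsum (\<lambda>i. (t * f i - g i)^2) A
        = infsum (\<lambda>i. (t^2 * (f i)^2 - 2 * t * (f i * g i)) + (g i)^2) A"
      by (rule infsum_cong) (simp add: power2_eq_square algebra_simps)
    also have "\<dots> = infsum (\<lambda>i. t^2 * (f i)^2) A - infsum (\<lambda>i. 2 * t * (f i * g i)) A
        + infsum (\<lambda>i. (g i)^2) A"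
      by (simp add: infsum_add[OF summable_on_diff[OF s1 s2] g] infsum_diff[OF s1 s2])
    also have "\<dots> = t^2 * infsum (\<lambda>i. (f i)^2) A - 2 * t * infsum (\<lambda>i. f i * g i) A
        + infsum (\<lambda>i. (g i)^2) A"
      using f fg by (simp add: infsum_cmult_right)
    finally show "0 \<le> t^2 * infsum (\<lambda>i. (f i)^2) A - 2 * t * infsum (\<lambda>i. f i * g i) A
        + infsum (\<lambda>i. (g i)^2) A"
      by (metis infsum_nonneg[of A "\<lambda>i. (t * f i - g i)^2"] zero_le_power2)
  qed (rule infsum_nonneg, simp)
qed

lemma infsum_Cauchy_Schwarz:
  fixes a b :: "'a \<Rightarrow> complex"
  assumes a: "(\<lambda>i. (cmod (a i))^2) summable_on A" and b: "(\<lambda>i. (cmod (b i))^2) summable_on A"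
  shows "(\<lambda>i. a i * b i) summable_on A"
    and "(cmod (infsum (\<lambda>i. a i * b i) A))^2
           \<le> infsum (\<lambda>i. (cmod (a i))^2) A * infsum (\<lambda>i. (cmod (b i))^2) A"
proof -
  have n: "(\<lambda>i. cmod (a i * b i)) summable_on A"
    and ineq: "(infsum (\<lambda>i. cmod (a i * b i)) A)^2
                 \<le> infsum (\<lambda>i. (cmod (a i))^2) A * infsum (\<lambda>i. (cmod (b i))^2) A"
    using infsum_Cauchy_Schwarz_real[OF a b] by (auto simp: norm_mult)
  then show "(\<lambda>i. a i * b i) summable_on A"
    using summable_on_iff_abs_summable_on_complex by blast
  have "cmod (infsum (\<lambda>i. a i * b i) A) \<le> infsum (\<lambda>i. cmod (a i * b i)) A"
    by (rule norm_infsum_bound) (use n in simp)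
  then have "(cmod (infsum (\<lambda>i. a i * b i) A))^2 \<le> (infsum (\<lambda>i. cmod (a i * b i)) A)^2"
    by (rule power_mono) simp
  with ineq show "(cmod (infsum (\<lambda>i. a i * b i) A))^2
           \<le> infsum (\<lambda>i. (cmod (a i))^2) A * infsum (\<lambda>i. (cmod (b i))^2) A"
    by linarith
qed

section \<open>Square summable sequences\<close>

definition l2_normsq :: "(nat \<Rightarrow> complex) \<Rightarrow> real" where
  "l2_normsq x = infsum (\<lambda>n. (cmod (x n))^2) UNIV"

abbreviation square_summable :: "(nat \<Rightarrow> complex) \<Rightarrow> bool" where
  "square_summable x \<equiv> (\<lambda>n. (cmod (x n))^2) summable_on UNIV"

lemma square_summable_iff: "square_summable x \<longleftrightarrow> summable (\<lambda>n. (cmod (x n))^2)"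
  by (rule summable_on_UNIV_nonneg_real_iff) simp

lemma mem_l2_iff: "x \<in> l2 K \<longleftrightarrow> (\<forall>n. x n \<in> K) \<and> square_summable x"
  unfolding l2_def square_summable_iff by simp

lemma l2_normsq_nonneg: "l2_normsq x \<ge> 0"
  unfolding l2_normsq_def by (rule infsum_nonneg) simp

lemma l2_norm_eq_sqrt_l2_normsq: "square_summable x \<Longrightarrow> l2_norm x = sqrt (l2_normsq x)"
  unfolding l2_norm_def l2_normsq_def by (simp add: suminf_infsum)

lemma l2_norm_power2: "square_summable x \<Longrightarrow> (l2_norm x)^2 = l2_normsq x"
  using l2_norm_eq_sqrt_l2_normsq l2_normsq_nonneg by simp

lemma l2_coord_le: "square_summable x \<Longrightarrow> (cmod (x i))^2 \<le> l2_normsq x"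
  unfolding l2_normsq_def
  using finite_sum_le_infsum[of "\<lambda>n. (cmod (x n))^2" UNIV "{i}"] by simp

lemma norm_lincomb_power2_le:
  fixes \<alpha> \<beta> a b :: complex
  shows "(cmod (\<alpha> * a + \<beta> * b))^2 \<le> 2 * (cmod \<alpha>)^2 * (cmod a)^2 + 2 * (cmod \<beta>)^2 * (cmod b)^2"
proof -
  have "cmod (\<alpha> * a + \<beta> * b) \<le> cmod \<alpha> * cmod a + cmod \<beta> * cmod b"
    using norm_triangle_ineq[of "\<alpha> * a" "\<beta> * b"] by (simp add: norm_mult)
  then have "(cmod (\<alpha> * a + \<beta> * b))^2 \<le> (cmod \<alpha> * cmod a + cmod \<beta> * cmod b)^2"
    by (rule power_mono) simp
  also have "\<dots> \<le> 2 * (cmod \<alpha>)^2 * (cmod a)^2 + 2 * (cmod \<beta>)^2 * (cmod b)^2"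
    using sum_squares_bound[of "cmod \<alpha> * cmod a" "cmod \<beta> * cmod b"]
    by (simp add: power2_eq_square algebra_simps)
  finally show ?thesis .
qed

lemma square_summable_lincomb:
  assumes "square_summable x" "square_summable y"
  shows "square_summable (\<lambda>n. c * x n + y n)"
proof -
  have "(\<lambda>n. 2 * (cmod c)^2 * (cmod (x n))^2 + 2 * (cmod 1)^2 * (cmod (y n))^2) summable_on UNIV"
    by (intro summable_on_add summable_on_cmult_right assms)
  then show ?thesis
    by (rule summable_on_comparison_test)
       (use norm_lincomb_power2_le[of c _ 1] in auto)
qed

lemma l2_inner_eq_infsum:
  assumes "square_summable x" "square_summable y"
  shows "(\<lambda>n. x n * cnj (y n)) summable_on UNIV"
    and "l2_inner x y = infsum (\<lambda>n. x n * cnj (y n)) UNIV"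
proof -
  have y': "(\<lambda>n. (cmod (cnj (y n)))^2) summable_on UNIV" using assms(2) by simp
  show s: "(\<lambda>n. x n * cnj (y n)) summable_on UNIV" using infsum_Cauchy_Schwarz(1)[OF assms(1) y'] .
  show "l2_inner x y = infsum (\<lambda>n. x n * cnj (y n)) UNIV"
    unfolding l2_inner_def by (rule suminf_infsum[OF s])
qed

lemma l2_inner_self: "square_summable x \<Longrightarrow> l2_inner x x = complex_of_real (l2_normsq x)"
proof -
  assume x: "square_summable x"
  have "l2_inner x x = infsum (\<lambda>n. complex_of_real ((cmod (x n))^2)) UNIV"
    unfolding l2_inner_eq_infsum(2)[OF x x]
    by (rule infsum_cong) (simp add: complex_norm_square[symmetric] del: of_real_power)
  also have "\<dots> = complex_of_real (l2_normsq x)"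
    unfolding l2_normsq_def using x by (rule infsum_of_real)
  finally show ?thesis .
qed

lemma l2_inner_commute_cnj:
  assumes "square_summable x" "square_summable y"
  shows "l2_inner x y = cnj (l2_inner y x)"
proof -
  have "cnj (infsum (\<lambda>n. y n * cnj (x n)) UNIV) = infsum (\<lambda>n. x n * cnj (y n)) UNIV"
    by (simp flip: infsum_cnj add: mult.commute)
  then show ?thesis using l2_inner_eq_infsum(2)[OF assms] l2_inner_eq_infsum(2)[OF assms(2,1)] by simp
qed

lemma square_summable_unit_vec: "square_summable (unit_vec j)"
  and l2_norm_unit_vec: "l2_norm (unit_vec j) = 1"
proof -
  have e: "(\<lambda>n. (cmod (unit_vec j n))^2) = (\<lambda>n. if n = j then 1 else 0)"
    unfolding unit_vec_def by auto
  show l: "square_summable (unit_vec j)" unfolding e by (rule has_sum_single)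
  have n: "l2_normsq (unit_vec j) = 1" unfolding l2_normsq_def e by (rule has_sum_single)
  show "l2_norm (unit_vec j) = 1" using l2_norm_eq_sqrt_l2_normsq[OF l] n by simp
qed

lemma l2_inner_unit_vec:
  assumes "square_summable y"
  shows "l2_inner (unit_vec j) y = cnj (y j)"
proof -
  have "l2_inner (unit_vec j) y = infsum (\<lambda>n. if n = j then cnj (y j) else 0) UNIV"
    unfolding l2_inner_eq_infsum(2)[OF square_summable_unit_vec assms]
    by (rule infsum_cong) (simp add: unit_vec_def)
  also have "\<dots> = cnj (y j)" by (rule has_sum_single)
  finally show ?thesis .
qed

section \<open>The scalar field\<close>

lemma scalar_field_closed:
  assumes "scalar_field K"
  shows "0 \<in> K" "1 \<in> K" "\<And>r. complex_of_real r \<in> K"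
    "\<And>a b. a \<in> K \<Longrightarrow> b \<in> K \<Longrightarrow> a + b \<in> K"
    "\<And>a b. a \<in> K \<Longrightarrow> b \<in> K \<Longrightarrow> a * b \<in> K"
    "\<And>a. a \<in> K \<Longrightarrow> cnj a \<in> K"
  using assms unfolding scalar_field_def by (auto simp: complex_is_Real_iff)

lemma scalar_field_infsum:
  assumes "scalar_field K" "f summable_on A" "\<And>x. x \<in> A \<Longrightarrow> f x \<in> K"
  shows "infsum f A \<in> K"
proof (cases "K = UNIV")
  case False
  then have K: "K = \<real>" using assms(1) unfolding scalar_field_def by auto
  have "infsum f A = infsum (\<lambda>x. complex_of_real (Re (f x))) A"
    by (rule infsum_cong) (use assms(3) K in \<open>auto simp: complex_is_Real_iff\<close>)
  also have "\<dots> = complex_of_real (infsum (\<lambda>x. Re (f x)) A)"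
    by (rule infsum_of_real) (rule summable_on_bounded_linear[OF bounded_linear_Re assms(2)])
  finally show ?thesis using K by simp
qed simp

lemma scalar_field_LIMSEQ:
  assumes "scalar_field K" "\<And>p. f p \<in> K" "f \<longlonglongrightarrow> l"
  shows "l \<in> K"
proof (cases "K = UNIV")
  case False
  then have K: "K = \<real>" using assms(1) unfolding scalar_field_def by auto
  show ?thesis using closed_sequentially[OF closed_complex_Reals, of f l] assms(2,3) K by auto
qed simp

lemma unit_vec_in_l2: "scalar_field K \<Longrightarrow> unit_vec j \<in> l2 K"
  unfolding mem_l2_iff using square_summable_unit_vec scalar_field_closed(1,2)
  unfolding unit_vec_def by auto

lemma zero_in_l2: "scalar_field K \<Longrightarrow> (\<lambda>n. 0) \<in> l2 K"
  unfolding l2_def using scalar_field_closed(1) by auto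

section \<open>Hilbert-Schmidt matrices\<close>

definition hs_matrix :: "(nat \<Rightarrow> nat \<Rightarrow> complex) \<Rightarrow> bool" where
  "hs_matrix M \<longleftrightarrow> (\<lambda>(i,j). (cmod (M i j))^2) summable_on UNIV"

definition hs_normsq :: "(nat \<Rightarrow> nat \<Rightarrow> complex) \<Rightarrow> real" where
  "hs_normsq M = infsum (\<lambda>(i,j). (cmod (M i j))^2) UNIV"

definition row_normsq :: "(nat \<Rightarrow> nat \<Rightarrow> complex) \<Rightarrow> nat \<Rightarrow> real" where
  "row_normsq M i = infsum (\<lambda>j. (cmod (M i j))^2) UNIV"

definition mat_apply :: "(nat \<Rightarrow> nat \<Rightarrow> complex) \<Rightarrow> (nat \<Rightarrow> complex) \<Rightarrow> nat \<Rightarrow> complex" where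
  "mat_apply M x = (\<lambda>i. infsum (\<lambda>j. M i j * x j) UNIV)"

definition mat_form :: "(nat \<Rightarrow> nat \<Rightarrow> complex) \<Rightarrow> (nat \<Rightarrow> complex) \<Rightarrow> (nat \<Rightarrow> complex) \<Rightarrow> complex" where
  "mat_form M x y = infsum (\<lambda>(i,j). M i j * x j * cnj (y i)) UNIV"

definition mat_adj :: "(nat \<Rightarrow> nat \<Rightarrow> complex) \<Rightarrow> nat \<Rightarrow> nat \<Rightarrow> complex" where
  "mat_adj M = (\<lambda>i j. cnj (M j i))"

definition mat_over :: "complex set \<Rightarrow> (nat \<Rightarrow> nat \<Rightarrow> complex) \<Rightarrow> bool" where
  "mat_over K M \<longleftrightarrow> (\<forall>i j. M i j \<in> K)"

lemma hs_matrix_pairs: "hs_matrix M \<longleftrightarrow> (\<lambda>q. (cmod (M (fst q) (snd q)))^2) summable_on UNIV"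
  unfolding hs_matrix_def by (simp add: case_prod_unfold)

lemma hs_normsq_pairs: "hs_normsq M = infsum (\<lambda>q. (cmod (M (fst q) (snd q)))^2) UNIV"
  unfolding hs_normsq_def by (simp add: case_prod_unfold)

lemma mat_form_pairs:
  "mat_form M x x = infsum (\<lambda>q. M (fst q) (snd q) * (x (snd q) * cnj (x (fst q)))) UNIV"
  unfolding mat_form_def by (simp add: case_prod_unfold mult.assoc)

lemma hs_matrix_row:
  assumes "hs_matrix M"
  shows "(\<lambda>j. (cmod (M i j))^2) summable_on UNIV"
  using summable_on_SigmaD1[of "\<lambda>x y. (cmod (M x y))^2" UNIV "\<lambda>_. UNIV" i] assms
  unfolding hs_matrix_def by simp

lemma hs_matrix_rows:
  assumes "hs_matrix M"
  shows "row_normsq M summable_on UNIV" "infsum (row_normsq M) UNIV = hs_normsq M"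
proof -
  have s: "(\<lambda>(x,y). (cmod (M x y))^2) summable_on Sigma UNIV (\<lambda>_. UNIV)"
    using assms unfolding hs_matrix_def by simp
  show "row_normsq M summable_on UNIV"
    using summable_on_SigmaD[OF s] hs_matrix_row[OF assms] unfolding row_normsq_def by simp
  show "infsum (row_normsq M) UNIV = hs_normsq M"
    using infsum_Sigma_banach[OF s] unfolding row_normsq_def hs_normsq_def by simp
qed

lemma entry_le_hs_normsq:
  assumes "hs_matrix M"
  shows "(cmod (M i j))^2 \<le> hs_normsq M"
proof -
  have "sum (\<lambda>(i,j). (cmod (M i j))^2) {(i,j)} \<le> infsum (\<lambda>(i,j). (cmod (M i j))^2) UNIV"
    by (rule finite_sum_le_infsum) (use assms in \<open>auto simp: hs_matrix_def\<close>)
  then show ?thesis unfolding hs_normsq_def by simp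
qed

lemma hs_matrix_mat_adj_iff: "hs_matrix (mat_adj M) \<longleftrightarrow> hs_matrix M"
  unfolding hs_matrix_def mat_adj_def
  using summable_on_prod_swap[of "\<lambda>i j. (cmod (M i j))^2"] by simp

lemma mat_apply_row:
  assumes "hs_matrix M" "square_summable x"
  shows "(\<lambda>j. M i j * x j) summable_on UNIV"
    and "(cmod (mat_apply M x i))^2 \<le> row_normsq M i * l2_normsq x"
  using infsum_Cauchy_Schwarz[OF hs_matrix_row[OF assms(1)] assms(2)]
  unfolding mat_apply_def row_normsq_def l2_normsq_def by auto

lemma mat_apply_square_summable:
  assumes "hs_matrix M" "square_summable x"
  shows "square_summable (mat_apply M x)" and "l2_normsq (mat_apply M x) \<le> hs_normsq M * l2_normsq x"
proof -
  have s: "(\<lambda>i. row_normsq M i * l2_normsq x) summable_on UNIV"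
    using summable_on_cmult_left[OF hs_matrix_rows(1)[OF assms(1)]] .
  show l: "square_summable (mat_apply M x)"
    by (rule summable_on_comparison_test[OF s]) (use mat_apply_row(2)[OF assms] in auto)
  have "l2_normsq (mat_apply M x) \<le> infsum (\<lambda>i. row_normsq M i * l2_normsq x) UNIV"
    unfolding l2_normsq_def[of "mat_apply M x"]
    by (rule infsum_mono[OF l s]) (use mat_apply_row(2)[OF assms] in auto)
  also have "\<dots> = hs_normsq M * l2_normsq x"
    using infsum_cmult_left[of "l2_normsq x" "row_normsq M" UNIV] hs_matrix_rows[OF assms(1)] by simp
  finally show "l2_normsq (mat_apply M x) \<le> hs_normsq M * l2_normsq x" .
qed

lemma mat_apply_unit_vec: "mat_apply M (unit_vec j) = (\<lambda>i. M i j)"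
proof
  fix i
  have "mat_apply M (unit_vec j) i = infsum (\<lambda>n. if n = j then M i j else 0) UNIV"
    unfolding mat_apply_def by (rule infsum_cong) (simp add: unit_vec_def)
  also have "\<dots> = M i j" by (rule has_sum_single)
  finally show "mat_apply M (unit_vec j) i = M i j" .
qed

lemma mat_apply_lincomb:
  assumes "hs_matrix M" "square_summable x" "square_summable y"
  shows "mat_apply M (\<lambda>n. c * x n + y n) = (\<lambda>n. c * mat_apply M x n + mat_apply M y n)"
proof
  fix i
  have sx: "(\<lambda>j. M i j * x j) summable_on UNIV" by (rule mat_apply_row(1)[OF assms(1,2)])
  have sy: "(\<lambda>j. M i j * y j) summable_on UNIV" by (rule mat_apply_row(1)[OF assms(1,3)])
  have "mat_apply M (\<lambda>n. c * x n + y n) i = infsum (\<lambda>j. c * (M i j * x j) + M i j * y j) UNIV"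
    unfolding mat_apply_def by (rule infsum_cong) (simp add: algebra_simps)
  also have "\<dots> = c * mat_apply M x i + mat_apply M y i"
    unfolding mat_apply_def infsum_add[OF summable_on_cmult_right[OF sx] sy]
    using sx by (simp add: infsum_cmult_right)
  finally show "mat_apply M (\<lambda>n. c * x n + y n) i = c * mat_apply M x i + mat_apply M y i" .
qed

lemma square_summable_outer:
  assumes "square_summable x" "square_summable y"
  shows "(\<lambda>(i,j). (cmod (x j * cnj (y i)))^2) summable_on UNIV"
    and "infsum (\<lambda>(i,j). (cmod (x j * cnj (y i)))^2) UNIV = l2_normsq x * l2_normsq y"
proof -
  let ?f = "\<lambda>(i,j). (cmod (y i))^2 * (cmod (x j))^2"
  have row: "((\<lambda>j. ?f (i,j)) has_sum ((cmod (y i))^2 * l2_normsq x)) UNIV" for i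
    using has_sum_cmult_right[OF has_sum_infsum[OF assms(1)], of "(cmod (y i))^2"]
    unfolding l2_normsq_def by simp
  have col: "(\<lambda>i. (cmod (y i))^2 * l2_normsq x) summable_on UNIV"
    using summable_on_cmult_left[OF assms(2)] .
  have s: "?f summable_on Sigma UNIV (\<lambda>_. UNIV)"
    by (rule summable_on_SigmaI[OF row col]) auto
  have e: "(\<lambda>(i,j). (cmod (x j * cnj (y i)))^2) = ?f"
    by (auto simp: norm_mult power_mult_distrib)
  show "(\<lambda>(i,j). (cmod (x j * cnj (y i)))^2) summable_on UNIV" using s unfolding e by simp
  have "infsum ?f UNIV = infsum (\<lambda>i. infsum (\<lambda>j. ?f (i,j)) UNIV) UNIV"
    using infsum_Sigma_banach[OF s] by simp
  also have "\<dots> = infsum (\<lambda>i. (cmod (y i))^2 * l2_normsq x) UNIV"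
    by (rule infsum_cong) (rule infsumI[OF row])
  also have "\<dots> = l2_normsq x * l2_normsq y"
    unfolding l2_normsq_def[of y] using infsum_cmult_left[of "l2_normsq x" "\<lambda>i. (cmod (y i))^2" UNIV]
      assms(2) by (simp add: mult.commute)
  finally show "infsum (\<lambda>(i,j). (cmod (x j * cnj (y i)))^2) UNIV = l2_normsq x * l2_normsq y"
    unfolding e .
qed

lemma mat_form_summable:
  assumes "hs_matrix M" "square_summable x" "square_summable y"
  shows "(\<lambda>(i,j). M i j * x j * cnj (y i)) summable_on UNIV"
proof -
  have "(\<lambda>p. (\<lambda>(i,j). M i j) p * (\<lambda>(i,j). x j * cnj (y i)) p) summable_on UNIV"
    by (rule infsum_Cauchy_Schwarz(1))
       (use assms(1) square_summable_outer(1)[OF assms(2,3)] in \<open>simp_all add: hs_matrix_def case_prod_unfold\<close>)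
  then show ?thesis by (simp add: case_prod_unfold mult.assoc)
qed

lemma l2_inner_mat_apply:
  assumes "hs_matrix M" "square_summable x" "square_summable y"
  shows "l2_inner (mat_apply M x) y = mat_form M x y"
proof -
  have "l2_inner (mat_apply M x) y = infsum (\<lambda>i. mat_apply M x i * cnj (y i)) UNIV"
    by (rule l2_inner_eq_infsum(2)[OF mat_apply_square_summable(1)[OF assms(1,2)] assms(3)])
  also have "\<dots> = infsum (\<lambda>i. infsum (\<lambda>j. M i j * x j * cnj (y i)) UNIV) UNIV"
    unfolding mat_apply_def
    by (rule infsum_cong, rule infsum_cmult_left[symmetric]) (use mat_apply_row(1)[OF assms(1,2)] in simp)
  also have "\<dots> = mat_form M x y"
    using infsum_Sigma_banach[of "\<lambda>(i,j). M i j * x j * cnj (y i)" UNIV "\<lambda>_. UNIV"]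
      mat_form_summable[OF assms] unfolding mat_form_def by simp
  finally show ?thesis .
qed

lemma cnj_mat_form: "cnj (mat_form M y x) = mat_form (mat_adj M) x y"
proof -
  have "cnj (mat_form M y x) = infsum (\<lambda>(i,j). cnj (M i j) * cnj (y j) * x i) UNIV"
    unfolding mat_form_def by (subst infsum_cnj[symmetric]) (simp add: case_prod_unfold del: infsum_cnj)
  also have "\<dots> = infsum (\<lambda>(i,j). cnj (M j i) * cnj (y i) * x j) UNIV"
    using infsum_prod_swap[of "\<lambda>i j. cnj (M i j) * cnj (y j) * x i"] by simp
  also have "\<dots> = mat_form (mat_adj M) x y"
    unfolding mat_form_def mat_adj_def by (rule infsum_cong) (auto simp: algebra_simps)
  finally show ?thesis .
qed

lemma mat_form_self_real:
  assumes "mat_adj M = M"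
  shows "mat_form M x x = complex_of_real (Re (mat_form M x x))"
proof -
  have "cnj (mat_form M x x) = mat_form M x x" using cnj_mat_form[of M x x] assms by simp
  then have "mat_form M x x \<in> \<real>" by (simp add: Reals_cnj_iff)
  then show ?thesis by (simp add: complex_is_Real_iff)
qed

lemma hs_matrix_lincomb:
  assumes "hs_matrix N" "hs_matrix N'"
  shows "hs_matrix (\<lambda>i j. \<alpha> * N i j + \<beta> * N' i j)"
    and "hs_normsq (\<lambda>i j. \<alpha> * N i j + \<beta> * N' i j)
           \<le> 2 * (cmod \<alpha>)^2 * hs_normsq N + 2 * (cmod \<beta>)^2 * hs_normsq N'"
proof -
  let ?a = "2 * (cmod \<alpha>)^2" and ?b = "2 * (cmod \<beta>)^2"
  have sN: "(\<lambda>(i,j). (cmod (N i j))^2) summable_on UNIV"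
    and sN': "(\<lambda>(i,j). (cmod (N' i j))^2) summable_on UNIV"
    using assms unfolding hs_matrix_def by auto
  have sR: "(\<lambda>(i,j). ?a * (cmod (N i j))^2 + ?b * (cmod (N' i j))^2) summable_on UNIV"
    using summable_on_add[OF summable_on_cmult_right[OF sN, of ?a] summable_on_cmult_right[OF sN', of ?b]]
    by (simp add: case_prod_unfold)
  have le: "(cmod (\<alpha> * N i j + \<beta> * N' i j))^2 \<le> ?a * (cmod (N i j))^2 + ?b * (cmod (N' i j))^2" for i j
    using norm_lincomb_power2_le by (simp add: mult.assoc)
  have sL: "(\<lambda>(i,j). (cmod (\<alpha> * N i j + \<beta> * N' i j))^2) summable_on UNIV"
    by (rule summable_on_comparison_test[OF sR]) (use le in auto)
  then show "hs_matrix (\<lambda>i j. \<alpha> * N i j + \<beta> * N' i j)" unfolding hs_matrix_def by simp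
  have "hs_normsq (\<lambda>i j. \<alpha> * N i j + \<beta> * N' i j)
          \<le> infsum (\<lambda>(i,j). ?a * (cmod (N i j))^2 + ?b * (cmod (N' i j))^2) UNIV"
    unfolding hs_normsq_def by (rule infsum_mono[OF sL sR]) (use le in auto)
  also have "\<dots> = ?a * hs_normsq N + ?b * hs_normsq N'"
    unfolding hs_normsq_def
    using infsum_add[OF summable_on_cmult_right[OF sN, of ?a] summable_on_cmult_right[OF sN', of ?b]]
      infsum_cmult_right[of ?a "\<lambda>(i,j). (cmod (N i j))^2" UNIV]
      infsum_cmult_right[of ?b "\<lambda>(i,j). (cmod (N' i j))^2" UNIV] sN sN'
    by (simp add: case_prod_unfold)
  finally show "hs_normsq (\<lambda>i j. \<alpha> * N i j + \<beta> * N' i j) \<le> ?a * hs_normsq N + ?b * hs_normsq N'" .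
qed

lemma mat_form_lincomb:
  assumes "hs_matrix N" "hs_matrix N'" "square_summable x" "square_summable y"
  shows "mat_form (\<lambda>i j. \<alpha> * N i j + \<beta> * N' i j) x y = \<alpha> * mat_form N x y + \<beta> * mat_form N' x y"
proof -
  let ?f = "\<lambda>(i,j). N i j * x j * cnj (y i)" and ?g = "\<lambda>(i,j). N' i j * x j * cnj (y i)"
  have "mat_form (\<lambda>i j. \<alpha> * N i j + \<beta> * N' i j) x y = infsum (\<lambda>p. \<alpha> * ?f p + \<beta> * ?g p) UNIV"
    unfolding mat_form_def by (rule infsum_cong) (auto simp: algebra_simps)
  also have "\<dots> = \<alpha> * mat_form N x y + \<beta> * mat_form N' x y"
    using mat_form_summable[OF assms(1,3,4)] mat_form_summable[OF assms(2,3,4)]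
    unfolding mat_form_def
    by (simp add: infsum_add summable_on_cmult_right infsum_cmult_right)
  finally show ?thesis .
qed

lemma mat_over_lincomb:
  assumes "scalar_field K" "\<alpha> \<in> K" "\<beta> \<in> K" "mat_over K N" "mat_over K N'"
  shows "mat_over K (\<lambda>i j. \<alpha> * N i j + \<beta> * N' i j)"
  using assms scalar_field_closed(4,5)[OF assms(1)] unfolding mat_over_def by blast

lemma mat_adj_lincomb_of_real:
  assumes "mat_adj N = N" "mat_adj N' = N'"
  shows "mat_adj (\<lambda>i j. of_real a * N i j + of_real b * N' i j) = (\<lambda>i j. of_real a * N i j + of_real b * N' i j)"
proof -
  have "cnj (N j i) = N i j" "cnj (N' j i) = N' i j" for i j
    using assms by (metis mat_adj_def)+
  then show ?thesis unfolding mat_adj_def by (auto simp: fun_eq_iff)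
qed

section \<open>Hilbert-Schmidt operators and their matrices\<close>

lemma mat_apply_l2:
  assumes "scalar_field K" "hs_matrix M" "mat_over K M" "x \<in> l2 K"
  shows "mat_apply M x \<in> l2 K"
proof -
  have x: "square_summable x" "\<And>n. x n \<in> K" using assms(4) unfolding mem_l2_iff by auto
  have "mat_apply M x i \<in> K" for i
    unfolding mat_apply_def
    by (rule scalar_field_infsum[OF assms(1) mat_apply_row(1)[OF assms(2) x(1)]])
       (use assms(3) x(2) scalar_field_closed(5)[OF assms(1)] in \<open>auto simp: mat_over_def\<close>)
  then show ?thesis unfolding mem_l2_iff using mat_apply_square_summable(1)[OF assms(2) x(1)] by blast
qed

lemma hilbert_schmidt_mat_apply:
  assumes "scalar_field K" "hs_matrix M" "mat_over K M"
  shows "hilbert_schmidt K (mat_apply M)"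
proof -
  have bound: "l2_norm (mat_apply M x) \<le> sqrt (hs_normsq M) * l2_norm x" if x: "square_summable x" for x
  proof -
    have "sqrt (l2_normsq (mat_apply M x)) \<le> sqrt (hs_normsq M * l2_normsq x)"
      by (rule real_sqrt_le_mono[OF mat_apply_square_summable(2)[OF assms(2) x]])
    then show ?thesis
      using l2_norm_eq_sqrt_l2_normsq[OF x] l2_norm_eq_sqrt_l2_normsq[OF mat_apply_square_summable(1)[OF assms(2) x]]
      by (simp add: real_sqrt_mult)
  qed
  have bo: "bounded_op K (mat_apply M)"
    unfolding bounded_op_def using mat_apply_l2[OF assms] mat_apply_lincomb[OF assms(2)] bound
    by (auto simp: mem_l2_iff intro!: exI[of _ "sqrt (hs_normsq M)"])
  have "(l2_norm (mat_apply M (unit_vec j)))^2 = row_normsq (mat_adj M) j" for j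
  proof -
    have "square_summable (\<lambda>i. M i j)"
      using hs_matrix_row[of "mat_adj M" j] assms(2) hs_matrix_mat_adj_iff unfolding mat_adj_def by simp
    then show ?thesis
      unfolding mat_apply_unit_vec by (simp add: l2_norm_power2 l2_normsq_def row_normsq_def mat_adj_def)
  qed
  moreover have "summable (row_normsq (mat_adj M))"
    using hs_matrix_rows(1)[of "mat_adj M"] assms(2) hs_matrix_mat_adj_iff
      summable_on_UNIV_nonneg_real_iff[of "row_normsq (mat_adj M)"]
    by (auto simp: row_normsq_def infsum_nonneg)
  ultimately show ?thesis using bo unfolding hilbert_schmidt_def by simp
qed

lemma self_adjoint_mat_apply:
  assumes "hs_matrix M" "mat_adj M = M"
  shows "self_adjoint_op K (mat_apply M)"
  unfolding self_adjoint_op_def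
proof (intro ballI)
  fix x y assume "x \<in> l2 K" "y \<in> l2 K"
  then have x: "square_summable x" and y: "square_summable y" by (auto simp: mem_l2_iff)
  have "l2_inner x (mat_apply M y) = cnj (l2_inner (mat_apply M y) x)"
    by (rule l2_inner_commute_cnj[OF x mat_apply_square_summable(1)[OF assms(1) y]])
  also have "\<dots> = mat_form M x y"
    using l2_inner_mat_apply[OF assms(1) y x] cnj_mat_form[of M y x] assms(2) by simp
  finally show "l2_inner (mat_apply M x) y = l2_inner x (mat_apply M y)"
    using l2_inner_mat_apply[OF assms(1) x y] by simp
qed

definition op_matrix :: "((nat \<Rightarrow> complex) \<Rightarrow> (nat \<Rightarrow> complex)) \<Rightarrow> nat \<Rightarrow> nat \<Rightarrow> complex" where
  "op_matrix T = (\<lambda>i j. T (unit_vec j) i)"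

definition trunc :: "nat \<Rightarrow> (nat \<Rightarrow> complex) \<Rightarrow> nat \<Rightarrow> complex" where
  "trunc N x = (\<lambda>n. if n < N then x n else 0)"

lemma bounded_op_lincomb:
  assumes "bounded_op K T" "c \<in> K" "x \<in> l2 K" "y \<in> l2 K"
  shows "T (\<lambda>n. c * x n + y n) = (\<lambda>n. c * T x n + T y n)"
  using assms unfolding bounded_op_def by blast

lemma bounded_op_l2:
  assumes "bounded_op K T" "x \<in> l2 K"
  shows "T x \<in> l2 K"
  using assms unfolding bounded_op_def by blast

lemma bounded_op_zero:
  assumes "scalar_field K" "bounded_op K T"
  shows "T (\<lambda>n. 0) = (\<lambda>n. 0)"
proof -
  have "T (\<lambda>n. 1 * 0 + 0) = (\<lambda>n. 1 * T (\<lambda>n. 0) n + T (\<lambda>n. 0) n)"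
    by (rule bounded_op_lincomb[OF assms(2) scalar_field_closed(2)[OF assms(1)]
          zero_in_l2[OF assms(1)] zero_in_l2[OF assms(1)]])
  then show ?thesis by (simp add: fun_eq_iff)
qed

lemma bounded_op_coord_tendsto_zero:
  assumes "bounded_op K T" "\<And>N. y N \<in> l2 K" "(\<lambda>N. l2_normsq (y N)) \<longlonglongrightarrow> 0"
  shows "(\<lambda>N. T (y N) i) \<longlonglongrightarrow> 0"
proof -
  obtain C where C: "\<And>x. x \<in> l2 K \<Longrightarrow> l2_norm (T x) \<le> C * l2_norm x"
    using assms(1) unfolding bounded_op_def by blast
  have y: "square_summable (y N)" "square_summable (T (y N))" for N
    using assms(2) bounded_op_l2[OF assms(1) assms(2)] by (auto simp: mem_l2_iff)
  have bound: "norm (T (y N) i) \<le> \<bar>C\<bar> * sqrt (l2_normsq (y N))" for N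
  proof -
    have "cmod (T (y N) i) \<le> sqrt (l2_normsq (T (y N)))"
      using l2_coord_le[OF y(2)] real_le_rsqrt by blast
    also have "\<dots> \<le> C * sqrt (l2_normsq (y N))"
      using C[OF assms(2)] by (simp add: l2_norm_eq_sqrt_l2_normsq y)
    also have "\<dots> \<le> \<bar>C\<bar> * sqrt (l2_normsq (y N))" by (intro mult_right_mono) (auto simp: l2_normsq_nonneg)
    finally show ?thesis .
  qed
  have "(\<lambda>N. \<bar>C\<bar> * sqrt (l2_normsq (y N))) \<longlonglongrightarrow> \<bar>C\<bar> * sqrt 0"
    by (rule tendsto_mult[OF tendsto_const tendsto_real_sqrt[OF assms(3)]])
  then have "(\<lambda>N. \<bar>C\<bar> * sqrt (l2_normsq (y N))) \<longlonglongrightarrow> 0" by simp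
  then show ?thesis
    by (rule Lim_null_comparison[rotated]) (use bound in \<open>auto intro: always_eventually\<close>)
qed

lemma trunc_in_l2:
  assumes "scalar_field K" "x \<in> l2 K"
  shows "trunc N x \<in> l2 K"
proof -
  have "square_summable (trunc N x)"
    by (rule has_sum_finite_support(2)[of "{..<N}"]) (auto simp: trunc_def)
  then show ?thesis using assms scalar_field_closed(1)[OF assms(1)] unfolding mem_l2_iff trunc_def by auto
qed

lemma bounded_op_trunc:
  assumes "scalar_field K" "bounded_op K T" "x \<in> l2 K"
  shows "T (trunc N x) = (\<lambda>i. \<Sum>j<N. x j * T (unit_vec j) i)"
proof (induction N)
  case 0
  have "trunc 0 x = (\<lambda>n. 0)" unfolding trunc_def by simp
  then show ?case using bounded_op_zero[OF assms(1,2)] by simp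
next
  case (Suc N)
  have "x N \<in> K" using assms(3) unfolding mem_l2_iff by auto
  moreover have "trunc (Suc N) x = (\<lambda>n. x N * unit_vec N n + trunc N x n)"
    unfolding trunc_def unit_vec_def by (auto simp: fun_eq_iff less_Suc_eq)
  ultimately have "T (trunc (Suc N) x) = (\<lambda>n. x N * T (unit_vec N) n + T (trunc N x) n)"
    using bounded_op_lincomb[OF assms(2) _ unit_vec_in_l2[OF assms(1)] trunc_in_l2[OF assms(1,3)]]
    by simp
  then show ?case using Suc by (simp add: add.commute)
qed

lemma trunc_tail_tendsto_zero:
  assumes "square_summable x"
  shows "(\<lambda>N. l2_normsq (\<lambda>n. (-1) * trunc N x n + x n)) \<longlonglongrightarrow> 0"
proof -
  have eq: "l2_normsq (\<lambda>n. (-1) * trunc N x n + x n) = l2_normsq x - (\<Sum>n<N. (cmod (x n))^2)" for N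
  proof -
    have s1: "(\<lambda>n. if n < N then 0 else (cmod (x n))^2) summable_on UNIV"
      by (rule summable_on_comparison_test[OF assms]) auto
    have s2: "((\<lambda>n. if n < N then (cmod (x n))^2 else 0) has_sum (\<Sum>n<N. (cmod (x n))^2)) UNIV"
      using has_sum_finite_support(1)[of "{..<N}" "\<lambda>n. if n < N then (cmod (x n))^2 else 0"] by simp
    have "l2_normsq x = infsum (\<lambda>n. (if n < N then 0 else (cmod (x n))^2)
                                   + (if n < N then (cmod (x n))^2 else 0)) UNIV"
      unfolding l2_normsq_def by (rule infsum_cong) auto
    also have "\<dots> = infsum (\<lambda>n. if n < N then 0 else (cmod (x n))^2) UNIV + (\<Sum>n<N. (cmod (x n))^2)"
      using infsum_add[OF s1 has_sum_imp_summable[OF s2]] infsumI[OF s2] by simp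
    also have "(\<lambda>n. if n < N then 0 else (cmod (x n))^2) = (\<lambda>n. (cmod ((-1) * trunc N x n + x n))^2)"
      unfolding trunc_def by auto
    finally show ?thesis unfolding l2_normsq_def by simp
  qed
  have "(\<lambda>N. \<Sum>n<N. (cmod (x n))^2) \<longlonglongrightarrow> l2_normsq x"
    using sums_infsum[OF assms] unfolding l2_normsq_def sums_def .
  then have "(\<lambda>N. l2_normsq x - (\<Sum>n<N. (cmod (x n))^2)) \<longlonglongrightarrow> l2_normsq x - l2_normsq x"
    by (intro tendsto_intros)
  then show ?thesis unfolding eq by simp
qed

lemma hs_matrix_op_matrix:
  assumes "scalar_field K" "hilbert_schmidt K T"
  shows "hs_matrix (op_matrix T)" "mat_over K (op_matrix T)"
proof -
  have bo: "bounded_op K T" using assms(2) unfolding hilbert_schmidt_def by simp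
  have col: "T (unit_vec j) \<in> l2 K" for j by (rule bounded_op_l2[OF bo unit_vec_in_l2[OF assms(1)]])
  show "mat_over K (op_matrix T)" unfolding mat_over_def op_matrix_def using col unfolding mem_l2_iff by auto
  have "summable (\<lambda>j. l2_normsq (T (unit_vec j)))"
    using assms(2) col unfolding hilbert_schmidt_def by (simp add: l2_norm_power2 mem_l2_iff)
  then have g: "(\<lambda>j. l2_normsq (T (unit_vec j))) summable_on UNIV"
    by (subst summable_on_UNIV_nonneg_real_iff) (auto simp: l2_normsq_nonneg)
  have "(\<lambda>p. (cmod (T (unit_vec (fst p)) (snd p)))^2) summable_on Sigma UNIV (\<lambda>_. UNIV)"
  proof (rule summable_on_SigmaI)
    fix j :: nat
    show "((\<lambda>i. (cmod (T (unit_vec (fst (j,i))) (snd (j,i))))^2) has_sum l2_normsq (T (unit_vec j))) UNIV"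
      using has_sum_infsum col unfolding mem_l2_iff l2_normsq_def by auto
  qed (use g in auto)
  then have "(\<lambda>(j,i). (cmod (T (unit_vec j) i))^2) summable_on UNIV" by (simp add: case_prod_unfold)
  then show "hs_matrix (op_matrix T)" unfolding hs_matrix_def op_matrix_def
    using summable_on_prod_swap[of "\<lambda>j i. (cmod (T (unit_vec j) i))^2"] by simp
qed

lemma hilbert_schmidt_eq_mat_apply:
  assumes "scalar_field K" "hilbert_schmidt K T" "x \<in> l2 K"
  shows "T x = mat_apply (op_matrix T) x"
proof
  fix i
  have bo: "bounded_op K T" using assms(2) unfolding hilbert_schmidt_def by simp
  have x: "square_summable x" using assms(3) unfolding mem_l2_iff by simp
  have m1: "-1 \<in> K" using assms(1) unfolding scalar_field_def by auto
  have tail: "(\<lambda>n. (-1) * trunc N x n + x n) \<in> l2 K" for N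
    using square_summable_lincomb[of "trunc N x" x "-1"] trunc_in_l2[OF assms(1,3), of N] assms(3)
      scalar_field_closed(1)[OF assms(1)]
    unfolding mem_l2_iff by (auto simp: trunc_def)
  have "(\<lambda>N. T (\<lambda>n. (-1) * trunc N x n + x n) i) \<longlonglongrightarrow> 0"
    by (rule bounded_op_coord_tendsto_zero[OF bo tail trunc_tail_tendsto_zero[OF x]])
  then have "(\<lambda>N. T x i - T (trunc N x) i) \<longlonglongrightarrow> 0"
    using bounded_op_lincomb[OF bo m1 trunc_in_l2[OF assms(1,3)] assms(3)] by simp
  from tendsto_diff[OF tendsto_const this, of "T x i"]
  have "(\<lambda>N. T (trunc N x) i) \<longlonglongrightarrow> T x i" by simp
  then have "(\<lambda>j. op_matrix T i j * x j) sums T x i"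
    using bounded_op_trunc[OF assms(1) bo assms(3)]
    unfolding sums_def by (simp add: op_matrix_def mult.commute)
  moreover have "(\<lambda>j. op_matrix T i j * x j) sums mat_apply (op_matrix T) x i"
    unfolding mat_apply_def
    by (rule sums_infsum[OF mat_apply_row(1)[OF hs_matrix_op_matrix(1)[OF assms(1,2)] x]])
  ultimately show "T x i = mat_apply (op_matrix T) x i" using sums_unique2 by blast
qed

section \<open>Weak compactness of Hilbert-Schmidt balls\<close>

lemma pointwise_limit_l2_bound:
  fixes A :: "nat \<Rightarrow> 'a \<Rightarrow> complex" and B :: "'a \<Rightarrow> complex"
  assumes s: "\<And>p. (\<lambda>q. (cmod (A p q))^2) summable_on UNIV"
    and b: "\<And>p. infsum (\<lambda>q. (cmod (A p q))^2) UNIV \<le> C"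
    and c: "\<And>q. (\<lambda>p. A p q) \<longlonglongrightarrow> B q"
  shows "(\<lambda>q. (cmod (B q))^2) summable_on UNIV" "infsum (\<lambda>q. (cmod (B q))^2) UNIV \<le> C"
proof -
  have fin: "sum (\<lambda>q. (cmod (B q))^2) F \<le> C" if "finite F" for F
  proof -
    have "(\<lambda>p. sum (\<lambda>q. (cmod (A p q))^2) F) \<longlonglongrightarrow> sum (\<lambda>q. (cmod (B q))^2) F"
      by (intro tendsto_intros c)
    moreover have "sum (\<lambda>q. (cmod (A p q))^2) F \<le> C" for p
      using finite_sum_le_infsum[OF s \<open>finite F\<close>, of p] b[of p] by simp
    ultimately show ?thesis by (intro LIMSEQ_le_const2) auto
  qed
  show sB: "(\<lambda>q. (cmod (B q))^2) summable_on UNIV"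
    by (rule nonneg_bdd_above_summable_on) (use fin in \<open>auto intro!: bdd_aboveI2\<close>)
  show "infsum (\<lambda>q. (cmod (B q))^2) UNIV \<le> C"
    by (rule infsum_le_finite_sums[OF sB]) (use fin in auto)
qed

lemma infsum_split_finite:
  fixes f :: "'a \<Rightarrow> 'b::banach"
  assumes "f summable_on UNIV" "finite F"
  shows "infsum f UNIV = sum f F + infsum f (- F)"
proof -
  have "infsum f (F \<union> - F) = infsum f F + infsum f (- F)"
    by (rule infsum_Un_disjoint) (use assms summable_on_subset_banach in auto)
  then show ?thesis using assms(2) by simp
qed

lemma l2_tail_small:
  fixes z :: "'a \<Rightarrow> complex"
  assumes "(\<lambda>q. (cmod (z q))^2) summable_on UNIV" "d > 0"
  obtains F where "finite F" "infsum (\<lambda>q. (cmod (z q))^2) (- F) \<le> d"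
proof -
  obtain F where F: "finite F"
    "dist (sum (\<lambda>q. (cmod (z q))^2) F) (infsum (\<lambda>q. (cmod (z q))^2) UNIV) \<le> d"
    using infsum_finite_approximation[OF assms] by blast
  from infsum_split_finite[OF assms(1) F(1)] show ?thesis using that F unfolding dist_real_def by force
qed

lemma l2_pairing_tail_bound:
  fixes D z :: "'a \<Rightarrow> complex"
  assumes "(\<lambda>q. (cmod (D q))^2) summable_on UNIV" "infsum (\<lambda>q. (cmod (D q))^2) UNIV \<le> C"
    and "(\<lambda>q. (cmod (z q))^2) summable_on UNIV" "infsum (\<lambda>q. (cmod (z q))^2) A \<le> d"
  shows "(cmod (infsum (\<lambda>q. D q * z q) A))^2 \<le> C * d"
proof -
  have sD: "(\<lambda>q. (cmod (D q))^2) summable_on A" and sz: "(\<lambda>q. (cmod (z q))^2) summable_on A"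
    using assms(1,3) by (auto intro: summable_on_subset_banach)
  have "(cmod (infsum (\<lambda>q. D q * z q) A))^2
          \<le> infsum (\<lambda>q. (cmod (D q))^2) A * infsum (\<lambda>q. (cmod (z q))^2) A"
    by (rule infsum_Cauchy_Schwarz(2)[OF sD sz])
  also have "\<dots> \<le> C * d"
  proof (rule mult_mono[OF _ assms(4)])
    show "infsum (\<lambda>q. (cmod (D q))^2) A \<le> C"
      using infsum_mono2[OF sD assms(1)] assms(2) by force
    have "0 \<le> infsum (\<lambda>q. (cmod (D q))^2) A" by (rule infsum_nonneg) simp
    then show "0 \<le> C" using \<open>infsum (\<lambda>q. (cmod (D q))^2) A \<le> C\<close> by linarith
    show "0 \<le> infsum (\<lambda>q. (cmod (z q))^2) A" by (rule infsum_nonneg) simp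
  qed
  finally show ?thesis .
qed

lemma l2_weak_tendsto_zero:
  fixes D :: "nat \<Rightarrow> 'a \<Rightarrow> complex"
  assumes s: "\<And>p. (\<lambda>q. (cmod (D p q))^2) summable_on UNIV"
    and b: "\<And>p. infsum (\<lambda>q. (cmod (D p q))^2) UNIV \<le> C"
    and c: "\<And>q. (\<lambda>p. D p q) \<longlonglongrightarrow> 0"
    and z: "(\<lambda>q. (cmod (z q))^2) summable_on UNIV"
  shows "(\<lambda>p. infsum (\<lambda>q. D p q * z q) UNIV) \<longlonglongrightarrow> 0"
proof (rule tendstoI)
  fix e :: real assume e: "e > 0"
  have C: "C \<ge> 0" using b[of 0] infsum_nonneg[of UNIV "\<lambda>q. (cmod (D 0 q))^2"] by simp
  define d where "d = (e / 2)^2 / (C + 1)"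
  have "d > 0" unfolding d_def using e C by simp
  then obtain F where F: "finite F" "infsum (\<lambda>q. (cmod (z q))^2) (- F) \<le> d"
    using l2_tail_small[OF z] by blast
  have split: "infsum (\<lambda>q. D p q * z q) UNIV = sum (\<lambda>q. D p q * z q) F + infsum (\<lambda>q. D p q * z q) (- F)" for p
    by (rule infsum_split_finite[OF infsum_Cauchy_Schwarz(1)[OF s z] F(1)])
  have tail: "cmod (infsum (\<lambda>q. D p q * z q) (- F)) \<le> e / 2" for p
  proof -
    have "(cmod (infsum (\<lambda>q. D p q * z q) (- F)))^2 \<le> C * d"
      by (rule l2_pairing_tail_bound[OF s b z F(2)])
    also have "\<dots> = (e / 2)^2 * (C / (C + 1))" unfolding d_def by (simp add: mult.commute)
    also have "\<dots> \<le> (e / 2)^2" using C by (intro mult_left_le) simp_all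
    finally show ?thesis by (rule power2_le_imp_le) (use e in simp)
  qed
  have "(\<lambda>p. sum (\<lambda>q. D p q * z q) F) \<longlonglongrightarrow> sum (\<lambda>q. 0 * z q) F"
    by (intro tendsto_intros c)
  then have "eventually (\<lambda>p. dist (sum (\<lambda>q. D p q * z q) F) 0 < e / 2) sequentially"
    using e by (intro tendstoD) auto
  then show "eventually (\<lambda>p. dist (infsum (\<lambda>q. D p q * z q) UNIV) 0 < e) sequentially"
  proof (rule eventually_mono)
    fix p assume "dist (sum (\<lambda>q. D p q * z q) F) 0 < e / 2"
    then have "norm (sum (\<lambda>q. D p q * z q) F) + norm (infsum (\<lambda>q. D p q * z q) (- F)) < e"
      using tail[of p] by simp
    then show "dist (infsum (\<lambda>q. D p q * z q) UNIV) 0 < e"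
      unfolding split dist_norm using norm_triangle_ineq order.strict_trans1 by fastforce
  qed
qed

lemma l2_weak_convergence:
  fixes A :: "nat \<Rightarrow> 'a \<Rightarrow> complex" and B :: "'a \<Rightarrow> complex"
  assumes s: "\<And>p. (\<lambda>q. (cmod (A p q))^2) summable_on UNIV"
    and b: "\<And>p. infsum (\<lambda>q. (cmod (A p q))^2) UNIV \<le> C"
    and c: "\<And>q. (\<lambda>p. A p q) \<longlonglongrightarrow> B q"
    and z: "(\<lambda>q. (cmod (z q))^2) summable_on UNIV"
  shows "(\<lambda>p. infsum (\<lambda>q. A p q * z q) UNIV) \<longlonglongrightarrow> infsum (\<lambda>q. B q * z q) UNIV"
proof -
  note sB = pointwise_limit_l2_bound(1)[OF s b c] and bB = pointwise_limit_l2_bound(2)[OF s b c]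
  define D where "D p q = 1 * A p q + (-1) * B q" for p q
  have le: "(cmod (D p q))^2 \<le> 2 * (cmod (A p q))^2 + 2 * (cmod (B q))^2" for p q
    using norm_lincomb_power2_le[of 1 "A p q" "-1" "B q"] unfolding D_def by simp
  have sAB: "(\<lambda>q. 2 * (cmod (A p q))^2 + 2 * (cmod (B q))^2) summable_on UNIV" for p
    by (intro summable_on_add summable_on_cmult_right s sB)
  have sD: "(\<lambda>q. (cmod (D p q))^2) summable_on UNIV" for p
    by (rule summable_on_comparison_test[OF sAB]) (use le in auto)
  have bD: "infsum (\<lambda>q. (cmod (D p q))^2) UNIV \<le> 4 * C" for p
  proof -
    have "infsum (\<lambda>q. (cmod (D p q))^2) UNIV \<le> infsum (\<lambda>q. 2 * (cmod (A p q))^2 + 2 * (cmod (B q))^2) UNIV"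
      by (rule infsum_mono[OF sD sAB]) (rule le)
    also have "\<dots> = 2 * infsum (\<lambda>q. (cmod (A p q))^2) UNIV + 2 * infsum (\<lambda>q. (cmod (B q))^2) UNIV"
      using s sB by (simp add: infsum_add infsum_cmult_right summable_on_cmult_right)
    also have "\<dots> \<le> 4 * C" using b[of p] bB by simp
    finally show ?thesis .
  qed
  have "(\<lambda>p. infsum (\<lambda>q. D p q * z q) UNIV) \<longlonglongrightarrow> 0"
    by (rule l2_weak_tendsto_zero[OF sD bD _ z]) (use c in \<open>simp add: D_def LIM_zero\<close>)
  moreover have "infsum (\<lambda>q. D p q * z q) UNIV = infsum (\<lambda>q. A p q * z q) UNIV - infsum (\<lambda>q. B q * z q) UNIV" for p
    unfolding D_def using infsum_diff[OF infsum_Cauchy_Schwarz(1)[OF s z] infsum_Cauchy_Schwarz(1)[OF sB z]]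
    by (simp add: algebra_simps)
  ultimately show ?thesis by (simp add: LIM_zero_iff)
qed

lemma bounded_diagonal_subsequence:
  fixes M :: "nat \<Rightarrow> nat \<Rightarrow> nat \<Rightarrow> complex"
  assumes bnd: "\<And>p i j. cmod (M p i j) \<le> R"
  obtains r where "strict_mono r" "\<And>i j. convergent (\<lambda>p. M (r p) i j)"
proof -
  define P where "P n s \<longleftrightarrow> convergent (\<lambda>p. M (s p) (fst (prod_decode n)) (snd (prod_decode n)))" for n s
  interpret subseqs P
  proof
    fix n and s :: "nat \<Rightarrow> nat" assume "strict_mono s"
    define f where "f p = M (s p) (fst (prod_decode n)) (snd (prod_decode n))" for p
    have "bounded (range f)" unfolding f_def bounded_iff using bnd by blast
    then obtain l r' where "strict_mono r'" "(f \<circ> r') \<longlonglongrightarrow> l"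
      using bounded_imp_convergent_subsequence by blast
    then show "\<exists>r'. strict_mono r' \<and> P n (s \<circ> r')"
      unfolding P_def f_def convergent_def by (auto simp: o_def)
  qed
  have stable: "P n (s \<circ> r)" if "strict_mono r" "P n s" for r s n
    using that unfolding P_def convergent_def
    using LIMSEQ_subseq_LIMSEQ by (fastforce simp: o_def)
  have "convergent (\<lambda>p. M (diagseq p) i j)" for i j
  proof -
    let ?k = "prod_encode (i,j)"
    have "P ?k (diagseq \<circ> (+) (Suc ?k))" by (rule diagseq_holds) (rule stable)
    then have "convergent (\<lambda>p. M (diagseq (p + Suc ?k)) i j)"
      unfolding P_def by (simp add: o_def add.commute)
    then show ?thesis
      unfolding convergent_def using LIMSEQ_offset[where f="\<lambda>p. M (diagseq p) i j"] by blast
  qed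
  then show ?thesis using that subseq_diagseq by blast
qed

lemma hs_matrix_pointwise_limit:
  assumes K: "scalar_field K"
    and M: "\<And>p. hs_matrix (M p)" "\<And>p. mat_adj (M p) = M p" "\<And>p. mat_over K (M p)"
      "\<And>p. hs_normsq (M p) \<le> C"
    and L: "\<And>i j. (\<lambda>p. M p i j) \<longlonglongrightarrow> L i j"
  shows "hs_matrix L" "mat_adj L = L" "mat_over K L" "hs_normsq L \<le> C"
    and "square_summable x \<Longrightarrow> (\<lambda>p. mat_form (M p) x x) \<longlonglongrightarrow> mat_form L x x"
proof -
  define A where "A p q = M p (fst q) (snd q)" for p and q :: "nat \<times> nat"
  have As: "(\<lambda>q. (cmod (A p q))^2) summable_on UNIV" for p
    using M(1)[of p] unfolding A_def hs_matrix_pairs .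
  have Ab: "infsum (\<lambda>q. (cmod (A p q))^2) UNIV \<le> C" for p
    using M(4)[of p] unfolding A_def hs_normsq_pairs .
  have Ac: "(\<lambda>p. A p q) \<longlonglongrightarrow> L (fst q) (snd q)" for q
    unfolding A_def by (rule L)
  show "hs_matrix L" unfolding hs_matrix_pairs using pointwise_limit_l2_bound(1)[OF As Ab Ac] .
  show "hs_normsq L \<le> C" unfolding hs_normsq_pairs using pointwise_limit_l2_bound(2)[OF As Ab Ac] .
  show "mat_adj L = L"
  proof (intro ext)
    fix i j
    have "(\<lambda>p. cnj (M p j i)) \<longlonglongrightarrow> cnj (L j i)" by (intro tendsto_cnj L)
    moreover have "cnj (M p j i) = M p i j" for p
      using fun_cong[OF fun_cong[OF M(2)[of p]], of i j] unfolding mat_adj_def by simp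
    ultimately have "(\<lambda>p. M p i j) \<longlonglongrightarrow> cnj (L j i)" by simp
    with L[of i j] show "mat_adj L i j = L i j" unfolding mat_adj_def using LIMSEQ_unique by metis
  qed
  show "mat_over K L"
    unfolding mat_over_def
    by (intro allI scalar_field_LIMSEQ[OF K _ L]) (use M(3) in \<open>auto simp: mat_over_def\<close>)
  assume x: "square_summable x"
  have "(\<lambda>q. (cmod (x (snd q) * cnj (x (fst q))))^2) summable_on UNIV"
    using square_summable_outer(1)[OF x x] by (simp add: case_prod_unfold)
  from l2_weak_convergence[OF As Ab Ac this]
  show "(\<lambda>p. mat_form (M p) x x) \<longlonglongrightarrow> mat_form L x x"
    unfolding mat_form_pairs A_def .
qed

lemma hs_ball_convergent_subsequence:
  fixes M :: "nat \<Rightarrow> nat \<Rightarrow> nat \<Rightarrow> complex"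
  assumes "\<And>p. hs_matrix (M p)" "\<And>p. hs_normsq (M p) \<le> C"
  obtains r L where "strict_mono r" "\<And>i j. (\<lambda>p. M (r p) i j) \<longlonglongrightarrow> L i j"
proof -
  have bound: "cmod (M p i j) \<le> sqrt C" for p i j
    using entry_le_hs_normsq[OF assms(1), of p i j] assms(2)[of p] real_le_rsqrt by force
  then obtain r where r: "strict_mono r" "\<And>i j. convergent (\<lambda>p. M (r p) i j)"
    using bounded_diagonal_subsequence[of M "sqrt C", OF bound] by blast
  show ?thesis
    by (rule that[OF r(1)]) (use r(2) in \<open>simp add: convergent_LIMSEQ_iff\<close>)
qed

section \<open>Frames and symmetric matrix units\<close>

definition bessel_seq :: "complex set \<Rightarrow> (nat \<Rightarrow> nat \<Rightarrow> complex) \<Rightarrow> real \<Rightarrow> bool" where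
  "bessel_seq K X B \<longleftrightarrow> B > 0 \<and> (\<forall>k. X k \<in> l2 K) \<and>
     (\<forall>x\<in>l2 K. summable (\<lambda>k. (cmod (l2_inner x (X k)))^2) \<and>
                (\<Sum>k. (cmod (l2_inner x (X k)))^2) \<le> B * (l2_norm x)^2)"

lemma is_frame_imp_bessel_seq:
  assumes "is_frame K X"
  obtains B where "bessel_seq K X B"
proof -
  from assms obtain A B where AB: "0 < A \<and> 0 < B \<and>
      (\<forall>x\<in>l2 K. summable (\<lambda>k. (cmod (l2_inner x (X k)))^2) \<and>
         A * (l2_norm x)^2 \<le> (\<Sum>k. (cmod (l2_inner x (X k)))^2) \<and>
         (\<Sum>k. (cmod (l2_inner x (X k)))^2) \<le> B * (l2_norm x)^2)"
    unfolding is_frame_def by blast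
  have "bessel_seq K X B"
    unfolding bessel_seq_def using AB assms[unfolded is_frame_def, THEN conjunct1] by simp
  then show ?thesis by (rule that)
qed

lemma bessel_seq_in_l2: "bessel_seq K X B \<Longrightarrow> X k \<in> l2 K"
  unfolding bessel_seq_def by blast

lemma bessel_seq_l2_normsq_le:
  assumes "bessel_seq K X B"
  shows "l2_normsq (X k) \<le> B"
proof -
  have x: "square_summable (X k)" using bessel_seq_in_l2[OF assms] unfolding mem_l2_iff by auto
  have f: "summable (\<lambda>p. (cmod (l2_inner (X k) (X p)))^2)"
    "(\<Sum>p. (cmod (l2_inner (X k) (X p)))^2) \<le> B * (l2_norm (X k))^2"
    using assms bessel_seq_in_l2[OF assms] unfolding bessel_seq_def by auto
  have "(cmod (l2_inner (X k) (X k)))^2 \<le> (\<Sum>p. (cmod (l2_inner (X k) (X p)))^2)"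
    using sum_le_suminf[OF f(1), of "{k}"] by simp
  also have "\<dots> \<le> B * l2_normsq (X k)" using f(2) l2_norm_power2[OF x] by simp
  finally have "(l2_normsq (X k))^2 \<le> B * l2_normsq (X k)"
    using l2_inner_self[OF x] l2_normsq_nonneg[of "X k"] by simp
  then show ?thesis
    using l2_normsq_nonneg[of "X k"] assms unfolding bessel_seq_def
    by (cases "l2_normsq (X k) = 0") (auto simp: power2_eq_square)
qed

lemma bessel_seq_column:
  assumes "bessel_seq K X B" "scalar_field K"
  shows "summable (\<lambda>k. (cmod (X k j))^2)" "(\<Sum>k. (cmod (X k j))^2) \<le> B"
proof -
  have e: "cmod (l2_inner (unit_vec j) (X k)) = cmod (X k j)" for k
    using l2_inner_unit_vec[of "X k" j] bessel_seq_in_l2[OF assms(1)] unfolding mem_l2_iff by simp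
  have "summable (\<lambda>k. (cmod (l2_inner (unit_vec j) (X k)))^2)"
    "(\<Sum>k. (cmod (l2_inner (unit_vec j) (X k)))^2) \<le> B * (l2_norm (unit_vec j))^2"
    using assms(1) unit_vec_in_l2[OF assms(2)] unfolding bessel_seq_def by auto
  then show "summable (\<lambda>k. (cmod (X k j))^2)" "(\<Sum>k. (cmod (X k j))^2) \<le> B"
    unfolding e l2_norm_unit_vec by simp_all
qed

definition sym_unit :: "nat \<Rightarrow> nat \<Rightarrow> nat \<Rightarrow> nat \<Rightarrow> complex" where
  "sym_unit j l = (\<lambda>a b. if (a = j \<and> b = l) \<or> (a = l \<and> b = j) then 1 else 0)"

lemma has_sum_two_points:
  fixes g :: "nat \<times> nat \<Rightarrow> 'b::{topological_comm_monoid_add,t2_space}"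
  assumes "j \<noteq> l" "\<And>a b. \<not> ((a = j \<and> b = l) \<or> (a = l \<and> b = j)) \<Longrightarrow> g (a,b) = 0"
  shows "g summable_on UNIV" "infsum g UNIV = g (j,l) + g (l,j)"
proof -
  have h: "\<And>p. p \<notin> {(j,l),(l,j)} \<Longrightarrow> g p = 0" using assms(2) by auto
  show "g summable_on UNIV" using has_sum_finite_support(2)[of "{(j,l),(l,j)}" g] h by simp
  show "infsum g UNIV = g (j,l) + g (l,j)"
    using has_sum_finite_support(3)[of "{(j,l),(l,j)}" g] h assms(1) by simp
qed

lemma hs_matrix_sym_unit: "j \<noteq> l \<Longrightarrow> hs_matrix (sym_unit j l)"
  unfolding hs_matrix_def by (rule has_sum_two_points(1)) (auto simp: sym_unit_def)

lemma hs_normsq_scaled_sym_unit: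
  assumes "j \<noteq> l"
  shows "hs_normsq (\<lambda>a b. c * sym_unit j l a b) = 2 * (cmod c)^2"
proof -
  have "infsum (\<lambda>(a,b). (cmod (c * sym_unit j l a b))^2) UNIV
      = (\<lambda>(a,b). (cmod (c * sym_unit j l a b))^2) (j,l) + (\<lambda>(a,b). (cmod (c * sym_unit j l a b))^2) (l,j)"
    by (rule has_sum_two_points(2)[OF assms]) (auto simp: sym_unit_def)
  then show ?thesis unfolding hs_normsq_def by (simp add: sym_unit_def)
qed

lemma mat_adj_sym_unit: "mat_adj (sym_unit j l) = sym_unit j l"
  unfolding mat_adj_def sym_unit_def by (auto simp: fun_eq_iff)

lemma mat_over_sym_unit: "scalar_field K \<Longrightarrow> mat_over K (sym_unit j l)"
  unfolding mat_over_def sym_unit_def using scalar_field_closed(1,2) by auto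

lemma mat_form_sym_unit:
  assumes "j \<noteq> l"
  shows "mat_form (sym_unit j l) x x = x l * cnj (x j) + x j * cnj (x l)"
proof -
  have "infsum (\<lambda>(a,b). sym_unit j l a b * x b * cnj (x a)) UNIV
      = (\<lambda>(a,b). sym_unit j l a b * x b * cnj (x a)) (j,l) + (\<lambda>(a,b). sym_unit j l a b * x b * cnj (x a)) (l,j)"
    by (rule has_sum_two_points(2)[OF assms]) (auto simp: sym_unit_def)
  then show ?thesis unfolding mat_form_def using assms by (simp add: sym_unit_def)
qed

definition pair_form :: "(nat \<Rightarrow> nat \<Rightarrow> complex) \<Rightarrow> nat \<Rightarrow> nat \<Rightarrow> nat \<Rightarrow> real" where
  "pair_form X j l k = Re (mat_form (sym_unit j l) (X k) (X k))"

lemma pair_form_power2_le: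
  assumes "j \<noteq> l"
  shows "(pair_form X j l k)^2 \<le> 4 * (cmod (X k j))^2 * (cmod (X k l))^2"
proof -
  have "\<bar>pair_form X j l k\<bar> \<le> cmod (mat_form (sym_unit j l) (X k) (X k))"
    unfolding pair_form_def by (rule abs_Re_le_cmod)
  also have "\<dots> \<le> cmod (X k l * cnj (X k j)) + cmod (X k j * cnj (X k l))"
    unfolding mat_form_sym_unit[OF assms] by (rule norm_triangle_ineq)
  also have "\<dots> = 2 * (cmod (X k j) * cmod (X k l))" by (simp add: norm_mult)
  finally have "(pair_form X j l k)^2 \<le> (2 * (cmod (X k j) * cmod (X k l)))^2"
    using power_mono[of "\<bar>pair_form X j l k\<bar>"] by (metis abs_ge_zero power2_abs)
  then show ?thesis by (simp add: power_mult_distrib)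
qed

lemma pair_form_square_summable:
  assumes "bessel_seq K X B" "scalar_field K" "j \<noteq> l"
  shows "summable (\<lambda>k. (pair_form X j l k)^2)"
proof (rule summable_comparison_test')
  show "summable (\<lambda>k. 4 * B * (cmod (X k j))^2)"
    by (rule summable_mult[OF bessel_seq_column(1)[OF assms(1,2)]])
  fix k
  have "(cmod (X k l))^2 \<le> B"
    using l2_coord_le[of "X k" l] bessel_seq_l2_normsq_le[OF assms(1), of k]
      bessel_seq_in_l2[OF assms(1), of k] unfolding mem_l2_iff by auto
  then have "4 * (cmod (X k j))^2 * (cmod (X k l))^2 \<le> 4 * (cmod (X k j))^2 * B"
    by (intro mult_left_mono) auto
  then show "norm ((pair_form X j l k)^2) \<le> 4 * B * (cmod (X k j))^2"
    using pair_form_power2_le[OF assms(3), of X k] by (simp add: algebra_simps)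
qed

lemma pair_form_block_sum_le:
  assumes "J \<inter> L = {}"
  shows "(\<Sum>p\<in>J \<times> L. (pair_form X (fst p) (snd p) k)^2)
           \<le> 4 * (\<Sum>j\<in>J. (cmod (X k j))^2) * (\<Sum>l\<in>L. (cmod (X k l))^2)"
proof -
  let ?a = "\<lambda>j. (cmod (X k j))^2"
  have "(\<Sum>p\<in>J \<times> L. (pair_form X (fst p) (snd p) k)^2) \<le> (\<Sum>p\<in>J \<times> L. 4 * (?a (fst p) * ?a (snd p)))"
  proof (rule sum_mono)
    fix p assume "p \<in> J \<times> L"
    then have "fst p \<noteq> snd p" using assms by auto
    from pair_form_power2_le[OF this, of X k]
    show "(pair_form X (fst p) (snd p) k)^2 \<le> 4 * (?a (fst p) * ?a (snd p))" by (simp add: mult.assoc)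
  qed
  also have "\<dots> = 4 * (\<Sum>j\<in>J. \<Sum>l\<in>L. ?a j * ?a l)"
    by (simp add: sum_distrib_left sum.cartesian_product case_prod_unfold)
  also have "\<dots> = 4 * (\<Sum>j\<in>J. ?a j) * (\<Sum>l\<in>L. ?a l)"
    by (simp add: sum_product mult.assoc)
  finally show ?thesis .
qed

lemma bessel_seq_pair_form_block_mass:
  assumes X: "bessel_seq K X B" and K: "scalar_field K"
  shows "(\<Sum>p\<in>{..<s} \<times> {s ..< 2 * s}. \<Sum>k. (pair_form X (fst p) (snd p) k)^2) \<le> 4 * B^2 * real s"
    (is "(\<Sum>p\<in>?P. _) \<le> _")
proof -
  define P where "P = ?P"
  have jl: "fst p \<noteq> snd p" if "p \<in> P" for p using that unfolding P_def by auto
  define a where "a k j = (cmod (X k j))^2" for k j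
  have col: "summable (\<lambda>k. a k j)" "(\<Sum>k. a k j) \<le> B" for j
    unfolding a_def using bessel_seq_column[OF X K] by auto
  have "(\<Sum>p\<in>P. \<Sum>k. (pair_form X (fst p) (snd p) k)^2) = (\<Sum>k. \<Sum>p\<in>P. (pair_form X (fst p) (snd p) k)^2)"
    by (rule suminf_sum[symmetric]) (rule pair_form_square_summable[OF X K jl])
  also have "\<dots> \<le> (\<Sum>k. 4 * B * (\<Sum>j<s. a k j))"
  proof (rule suminf_le)
    show "summable (\<lambda>k. \<Sum>p\<in>P. (pair_form X (fst p) (snd p) k)^2)"
      by (rule summable_sum) (rule pair_form_square_summable[OF X K jl])
    show "summable (\<lambda>k. 4 * B * (\<Sum>j<s. a k j))"
      by (intro summable_mult summable_sum col)
    fix k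
    have "(\<Sum>l\<in>{s ..< 2 * s}. a k l) \<le> l2_normsq (X k)"
      unfolding a_def l2_normsq_def
      by (rule finite_sum_le_infsum) (use bessel_seq_in_l2[OF X, of k] in \<open>auto simp: mem_l2_iff\<close>)
    also have "\<dots> \<le> B" by (rule bessel_seq_l2_normsq_le[OF X])
    finally have tail: "(\<Sum>l\<in>{s ..< 2 * s}. a k l) \<le> B" .
    have "(\<Sum>p\<in>P. (pair_form X (fst p) (snd p) k)^2)
            \<le> 4 * (\<Sum>j<s. a k j) * (\<Sum>l\<in>{s ..< 2 * s}. a k l)"
      unfolding P_def a_def by (rule pair_form_block_sum_le) auto
    also have "\<dots> \<le> 4 * (\<Sum>j<s. a k j) * B"
      by (rule mult_left_mono[OF tail]) (auto simp: a_def intro: sum_nonneg)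
    finally show "(\<Sum>p\<in>P. (pair_form X (fst p) (snd p) k)^2) \<le> 4 * B * (\<Sum>j<s. a k j)"
      by (simp add: algebra_simps)
  qed
  also have "\<dots> = 4 * B * (\<Sum>j<s. \<Sum>k. a k j)"
    using suminf_mult[of "\<lambda>k. \<Sum>j<s. a k j" "4 * B"] suminf_sum[of "{..<s}" "\<lambda>j k. a k j"]
      summable_sum[of "{..<s}" "\<lambda>j k. a k j"] col by simp
  also have "\<dots> \<le> 4 * B * (\<Sum>j<s. B)"
    using X unfolding bessel_seq_def by (intro mult_left_mono sum_mono) (use col in auto)
  also have "\<dots> = 4 * B^2 * real s" by (simp add: power2_eq_square)
  finally show ?thesis unfolding P_def .
qed

text \<open>Averaging over the s^2 pairs of the block leaves some pair with mass at most 4 B^2 / s.\<close>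
lemma bessel_seq_small_pair_form:
  assumes X: "bessel_seq K X B" and K: "scalar_field K" and eps: "eps > 0"
  shows "\<exists>j l. j \<noteq> l \<and> (\<Sum>k. (pair_form X j l k)^2) \<le> eps"
proof (rule ccontr)
  assume "\<not> ?thesis"
  then have big: "eps < (\<Sum>k. (pair_form X j l k)^2)" if "j \<noteq> l" for j l
    using that by (meson not_le)
  define s :: nat where "s = nat (ceiling (4 * B^2 / eps)) + 1"
  have s1: "s \<ge> 1" unfolding s_def by simp
  have "real s > 4 * B^2 / eps" unfolding s_def by linarith
  then have es: "eps * real s > 4 * B^2" using eps by (simp add: field_simps)
  define P where "P = {..<s} \<times> {s ..< 2 * s}"
  have "(0, s) \<in> P" unfolding P_def using s1 by auto
  then have Pne: "P \<noteq> {}" by blast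
  have "eps * real (card P) = (\<Sum>p\<in>P. eps)" by simp
  also have "\<dots> < (\<Sum>p\<in>P. \<Sum>k. (pair_form X (fst p) (snd p) k)^2)"
    by (rule sum_strict_mono) (use Pne big in \<open>auto simp: P_def\<close>)
  also have "\<dots> \<le> 4 * B^2 * real s"
    unfolding P_def by (rule bessel_seq_pair_form_block_mass[OF X K])
  finally have "eps * real s * real s < 4 * B^2 * real s"
    unfolding P_def by (simp add: card_cartesian_product)
  then have "eps * real s < 4 * B^2" using s1 by simp
  then show False using es by simp
qed

lemma bessel_seq_decaying_pairs:
  assumes X: "bessel_seq K X B" and K: "scalar_field K"
  obtains J :: "nat \<Rightarrow> nat \<times> nat" where "\<And>n. fst (J n) \<noteq> snd (J n)"
    "\<And>n. summable (\<lambda>k. (pair_form X (fst (J n)) (snd (J n)) k)^2)"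
    "\<And>n. (\<Sum>k. (pair_form X (fst (J n)) (snd (J n)) k)^2) \<le> (1/64)^n"
proof -
  have "\<forall>n. \<exists>p. fst p \<noteq> snd p \<and> (\<Sum>k. (pair_form X (fst p) (snd p) k)^2) \<le> (1/64)^n"
    using bessel_seq_small_pair_form[OF X K] by simp
  from choice[OF this] obtain J where J: "\<And>n. fst (J n) \<noteq> snd (J n)"
    "\<And>n. (\<Sum>k. (pair_form X (fst (J n)) (snd (J n)) k)^2) \<le> (1/64)^n"
    by blast
  show ?thesis by (rule that[OF J(1) pair_form_square_summable[OF X K J(1)] J(2)])
qed

section \<open>A continuous family of square summable sequences\<close>

definition clip :: "real \<Rightarrow> real" where
  "clip r = max (-1) (min 1 r)"

lemma abs_clip_le: "\<bar>clip r\<bar> \<le> 1"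
  unfolding clip_def by auto

lemma isCont_clip: "isCont clip r"
  unfolding clip_def by (intro continuous_intros)

definition coeff_seq :: "(nat \<Rightarrow> nat \<Rightarrow> real) \<Rightarrow> (nat \<Rightarrow> real) \<Rightarrow> nat \<Rightarrow> real" where
  "coeff_seq ph c k = (\<Sum>n. clip (c n) * 2^n * ph n k)"

lemma half_power_squares:
  shows "(\<lambda>n. ((1/2::real)^n)^2) summable_on UNIV" "infsum (\<lambda>n. ((1/2::real)^n)^2) UNIV = 4/3"
proof -
  have e: "(\<lambda>n. ((1/2::real)^n)^2) = (\<lambda>n. (1/4)^n)"
    by (simp add: power2_eq_square power_mult_distrib[symmetric])
  show s: "(\<lambda>n. ((1/2::real)^n)^2) summable_on UNIV"
    unfolding e by (subst summable_on_UNIV_nonneg_real_iff) (auto intro: summable_geometric)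
  have "(\<lambda>n. ((1/2::real)^n)^2) sums (1 / (1 - 1/4))" unfolding e by (rule geometric_sums) simp
  then show "infsum (\<lambda>n. ((1/2::real)^n)^2) UNIV = 4/3"
    using suminf_infsum[OF s] sums_unique by fastforce
qed

locale decaying_family =
  fixes ph :: "nat \<Rightarrow> nat \<Rightarrow> real"
  assumes summable_row: "\<And>n. summable (\<lambda>k. (ph n k)^2)"
    and row_bound: "\<And>n. (\<Sum>k. (ph n k)^2) \<le> (1/64)^n"
begin

lemma abs_entry_le: "\<bar>ph n k\<bar> \<le> (1/8)^n"
proof -
  have "(ph n k)^2 \<le> (\<Sum>k. (ph n k)^2)"
    using sum_le_suminf[OF summable_row[of n], of "{k}"] by simp
  also have "\<dots> \<le> ((1/8)^n)^2"
    using row_bound[of n] by (simp add: power_mult_distrib[symmetric] power2_eq_square)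
  finally show ?thesis using abs_le_square_iff[of "ph n k" "(1/8)^n"] by simp
qed

lemma coeff_term_bound: "\<bar>clip (c n) * 2^n * ph n k\<bar> \<le> (1/4)^n"
proof -
  have "\<bar>clip (c n) * 2^n * ph n k\<bar> = \<bar>clip (c n)\<bar> * 2^n * \<bar>ph n k\<bar>" by (simp add: abs_mult)
  also have "\<dots> \<le> 1 * 2^n * (1/8)^n"
    by (intro mult_mono abs_clip_le abs_entry_le) auto
  also have "\<dots> = (1/4)^n" by (simp add: power_divide[symmetric] flip: power_mult_distrib)
  finally show ?thesis .
qed

lemma coeff_term_summable: "summable (\<lambda>n. clip (c n) * 2^n * ph n k)"
  by (rule summable_comparison_test'[of "\<lambda>n. (1/4::real)^n"])
     (use coeff_term_bound in \<open>auto intro: summable_geometric\<close>)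

lemma coeff_seq_tendsto:
  assumes "cs \<longlonglongrightarrow> c0"
  shows "(\<lambda>p. coeff_seq ph (cs p) k) \<longlonglongrightarrow> coeff_seq ph c0 k"
proof -
  have lim: "(\<lambda>p. clip (cs p n) * 2^n * ph n k) \<longlonglongrightarrow> clip (c0 n) * 2^n * ph n k" for n
  proof -
    have "(\<lambda>p. cs p n) \<longlonglongrightarrow> c0 n"
      using continuous_on_tendsto_compose[OF continuous_on_product_coordinates[of n] assms] by simp
    then have "(\<lambda>p. clip (cs p n)) \<longlonglongrightarrow> clip (c0 n)" by (rule isCont_tendsto_compose[OF isCont_clip])
    then show ?thesis by (intro tendsto_mult_right)
  qed
  have "eventually (\<lambda>p. summable (\<lambda>n. norm (clip (cs p n) * 2^n * ph n k))) sequentially \<and>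
        summable (\<lambda>n. norm (clip (c0 n) * 2^n * ph n k)) \<and>
        ((\<lambda>p. suminf (\<lambda>n. clip (cs p n) * 2^n * ph n k))
           \<longlongrightarrow> suminf (\<lambda>n. clip (c0 n) * 2^n * ph n k)) sequentially"
    by (rule tannerys_theorem[where M="\<lambda>n. (1/4)^n"])
       (use lim coeff_term_bound in \<open>auto intro: always_eventually summable_geometric\<close>)
  then show ?thesis unfolding coeff_seq_def by blast
qed

lemma coeff_seq_fun_upd_diff:
  "coeff_seq ph (c(n := 1)) k - coeff_seq ph (c(n := -1)) k = 2 * 2^n * ph n k"
proof -
  have "coeff_seq ph (c(n := 1)) k - coeff_seq ph (c(n := -1)) k
      = (\<Sum>p. clip ((c(n := 1)) p) * 2^p * ph p k - clip ((c(n := -1)) p) * 2^p * ph p k)"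
    unfolding coeff_seq_def by (rule suminf_diff[OF coeff_term_summable coeff_term_summable])
  also have "\<dots> = (\<Sum>p. if p = n then 2 * 2^n * ph n k else 0)"
    by (rule suminf_cong) (auto simp: clip_def)
  also have "\<dots> = 2 * 2^n * ph n k"
    by (rule sums_unique[symmetric]) (use sums_single[of n "\<lambda>p. 2 * 2^n * ph n k"] in simp)
  finally show ?thesis .
qed

lemma weighted_entries_summable: "(\<lambda>(k,n). 16^n * (ph n k)^2) summable_on UNIV"
proof -
  have row: "((\<lambda>k. 16^n * (ph n k)^2) has_sum (16^n * (\<Sum>k. (ph n k)^2))) UNIV" for n
  proof -
    have "(\<lambda>k. 16^n * (ph n k)^2) sums (16^n * (\<Sum>k. (ph n k)^2))"
      by (rule sums_mult[OF summable_sums[OF summable_row]])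
    then show ?thesis by (rule sums_nonneg_imp_has_sum_strong) simp
  qed
  have "summable (\<lambda>n. 16^n * (\<Sum>k. (ph n k)^2))"
  proof (rule summable_comparison_test'[of "\<lambda>n. (1/4::real)^n"])
    show "summable (\<lambda>n. (1/4::real)^n)" by (rule summable_geometric) simp
    fix n
    have "16^n * (\<Sum>k. (ph n k)^2) \<le> 16^n * (1/64)^n" by (intro mult_left_mono row_bound) simp
    also have "\<dots> = (1/4)^n" by (simp add: power_divide[symmetric] flip: power_mult_distrib)
    finally show "norm (16^n * (\<Sum>k. (ph n k)^2)) \<le> (1/4::real)^n"
      using suminf_nonneg[OF summable_row[of n]] by simp
  qed
  then have col: "(\<lambda>n. 16^n * (\<Sum>k. (ph n k)^2)) summable_on UNIV"
    by (subst summable_on_UNIV_nonneg_real_iff) (auto intro!: mult_nonneg_nonneg suminf_nonneg summable_row)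
  have "(\<lambda>p. 16 ^ fst p * (ph (fst p) (snd p))^2) summable_on Sigma UNIV (\<lambda>_. UNIV)"
    by (rule summable_on_SigmaI[OF _ col]) (use row in auto)
  then show ?thesis
    using summable_on_prod_swap[of "\<lambda>n k. 16^n * (ph n k)^2"] by (simp add: case_prod_unfold)
qed

text \<open>Cauchy-Schwarz with the weights 2^-n and 4^n |ph n k|.\<close>
lemma coeff_seq_power2_le:
  "(coeff_seq ph c k)^2 \<le> 4/3 * infsum (\<lambda>n. 16^n * (ph n k)^2) UNIV"
proof -
  define f where "f n = (1/2::real)^n" for n
  define g where "g n = 4^n * \<bar>ph n k\<bar>" for n
  note f2 = half_power_squares[folded f_def]
  have g2: "(g n)^2 = 16^n * (ph n k)^2" for n
  proof -
    have "(16::real)^n = 4^n * 4^n" by (simp flip: power_mult_distrib)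
    then show ?thesis unfolding g_def by (simp add: power_mult_distrib power2_eq_square)
  qed
  have g2s: "(\<lambda>n. (g n)^2) summable_on UNIV"
    unfolding g2 using summable_on_SigmaD1[of "\<lambda>k n. 16^n * (ph n k)^2" UNIV "\<lambda>_. UNIV" k]
      weighted_entries_summable by (simp add: case_prod_unfold)
  note cs = infsum_Cauchy_Schwarz_real[OF f2(1) g2s]
  have fg: "f n * g n = 2^n * \<bar>ph n k\<bar>" for n
  proof -
    have "(1/2::real)^n * 4^n = 2^n" by (simp flip: power_mult_distrib)
    then show ?thesis unfolding f_def g_def by (simp add: mult.assoc)
  qed
  have abs_summable: "summable (\<lambda>n. \<bar>clip (c n) * 2^n * ph n k\<bar>)"
    by (rule summable_comparison_test'[of "\<lambda>n. (1/4::real)^n"])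
       (auto intro: summable_geometric coeff_term_bound)
  have "\<bar>coeff_seq ph c k\<bar> \<le> (\<Sum>n. \<bar>clip (c n) * 2^n * ph n k\<bar>)"
    unfolding coeff_seq_def by (rule summable_rabs[OF abs_summable])
  also have "\<dots> \<le> (\<Sum>n. f n * g n)"
  proof (rule suminf_le[OF _ abs_summable summable_on_imp_summable[OF cs(1)]])
    fix n show "\<bar>clip (c n) * 2^n * ph n k\<bar> \<le> f n * g n"
      unfolding fg using abs_clip_le[of "c n"] by (simp add: abs_mult mult_left_le_one_le)
  qed
  also have "\<dots> = infsum (\<lambda>n. f n * g n) UNIV" by (rule suminf_infsum[OF cs(1)])
  finally have "(coeff_seq ph c k)^2 \<le> (infsum (\<lambda>n. f n * g n) UNIV)^2"
    using abs_le_square_iff[of "coeff_seq ph c k" "infsum (\<lambda>n. f n * g n) UNIV"] by simp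
  also have "\<dots> \<le> infsum (\<lambda>n. (f n)^2) UNIV * infsum (\<lambda>n. (g n)^2) UNIV" by (rule cs(2))
  finally show ?thesis unfolding f2(2) g2 .
qed

lemma coeff_seq_square_summable: "summable (\<lambda>k. (coeff_seq ph c k)^2)"
proof -
  have "(\<lambda>k. infsum (\<lambda>n. 16^n * (ph n k)^2) UNIV) summable_on UNIV"
    using summable_on_SigmaD[of "\<lambda>(k,n). 16^n * (ph n k)^2" UNIV "\<lambda>_. UNIV"] weighted_entries_summable
      summable_on_SigmaD1[of "\<lambda>k n. 16^n * (ph n k)^2" UNIV "\<lambda>_. UNIV"] by simp
  then have "(\<lambda>k. (coeff_seq ph c k)^2) summable_on UNIV"
    by (rule summable_on_comparison_test[OF summable_on_cmult_right[of _ _ "4/3"]])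
       (use coeff_seq_power2_le in auto)
  then show ?thesis by (subst summable_on_UNIV_nonneg_real_iff[symmetric]) auto
qed

end

section \<open>The Baire category argument\<close>

definition sa_hs_ball :: "complex set \<Rightarrow> real \<Rightarrow> (nat \<Rightarrow> nat \<Rightarrow> complex) set" where
  "sa_hs_ball K C = {M. hs_matrix M \<and> mat_adj M = M \<and> mat_over K M \<and> hs_normsq M \<le> C}"

definition realisable ::
    "complex set \<Rightarrow> (nat \<Rightarrow> nat \<Rightarrow> complex) \<Rightarrow> (nat \<Rightarrow> nat \<Rightarrow> real) \<Rightarrow> nat \<Rightarrow> (nat \<Rightarrow> real) set" where
  "realisable K X ph m = {c. \<exists>M\<in>sa_hs_ball K (real m).
       \<forall>k. mat_form M (X k) (X k) = complex_of_real (coeff_seq ph c k)}"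

lemma sa_hs_ball_lincomb:
  assumes K: "scalar_field K" and M: "M \<in> sa_hs_ball K C" and N: "N \<in> sa_hs_ball K C'"
  shows "(\<lambda>i j. of_real a * M i j + of_real b * N i j) \<in> sa_hs_ball K (2 * a^2 * C + 2 * b^2 * C')"
proof -
  have M': "hs_matrix M" "mat_adj M = M" "mat_over K M" "hs_normsq M \<le> C"
    and N': "hs_matrix N" "mat_adj N = N" "mat_over K N" "hs_normsq N \<le> C'"
    using M N unfolding sa_hs_ball_def by auto
  have "hs_normsq (\<lambda>i j. of_real a * M i j + of_real b * N i j)
          \<le> 2 * (cmod (of_real a))^2 * hs_normsq M + 2 * (cmod (of_real b))^2 * hs_normsq N"
    by (rule hs_matrix_lincomb(2)[OF M'(1) N'(1)])
  also have "\<dots> \<le> 2 * a^2 * C + 2 * b^2 * C'"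
    using mult_left_mono[OF M'(4), of "2 * a^2"] mult_left_mono[OF N'(4), of "2 * b^2"] by simp
  finally show ?thesis
    unfolding sa_hs_ball_def
    using hs_matrix_lincomb(1)[OF M'(1) N'(1)] mat_adj_lincomb_of_real[OF M'(2) N'(2)]
      mat_over_lincomb[OF K scalar_field_closed(3)[OF K] scalar_field_closed(3)[OF K] M'(3) N'(3)]
    by blast
qed

lemma sym_unit_in_sa_hs_ball:
  assumes "scalar_field K" "j \<noteq> l"
  shows "sym_unit j l \<in> sa_hs_ball K 2"
  using hs_matrix_sym_unit[OF assms(2)] mat_adj_sym_unit mat_over_sym_unit[OF assms(1)]
    hs_normsq_scaled_sym_unit[OF assms(2), of 1]
  unfolding sa_hs_ball_def by simp

lemma closed_realisable:
  assumes K: "scalar_field K" and X: "\<And>k. square_summable (X k)" and ph: "decaying_family ph"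
  shows "closed (realisable K X ph m)"
  unfolding closed_sequential_limits
proof (intro allI impI, elim conjE)
  fix cs c0 assume cs: "\<forall>p. cs p \<in> realisable K X ph m" and lim: "cs \<longlonglongrightarrow> c0"
  have "\<forall>p. \<exists>Mp. Mp \<in> sa_hs_ball K (real m) \<and>
          (\<forall>k. mat_form Mp (X k) (X k) = complex_of_real (coeff_seq ph (cs p) k))"
    using cs unfolding realisable_def by blast
  from choice[OF this] obtain M where M: "\<And>p. M p \<in> sa_hs_ball K (real m)"
    "\<And>p k. mat_form (M p) (X k) (X k) = complex_of_real (coeff_seq ph (cs p) k)"
    by blast
  have hs: "hs_matrix (M p)" "mat_adj (M p) = M p" "mat_over K (M p)" "hs_normsq (M p) \<le> real m" for p
    using M(1)[of p] unfolding sa_hs_ball_def by auto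
  obtain r L where r: "strict_mono r" and L: "\<And>i j. (\<lambda>p. M (r p) i j) \<longlonglongrightarrow> L i j"
    using hs_ball_convergent_subsequence[of M, OF hs(1,4)] by blast
  note limit = hs_matrix_pointwise_limit[of K "\<lambda>p. M (r p)", OF K hs L]
  have "L \<in> sa_hs_ball K (real m)" unfolding sa_hs_ball_def using limit(1-4) by blast
  moreover have "mat_form L (X k) (X k) = complex_of_real (coeff_seq ph c0 k)" for k
  proof -
    have "(\<lambda>p. coeff_seq ph (cs (r p)) k) \<longlonglongrightarrow> coeff_seq ph c0 k"
      using LIMSEQ_subseq_LIMSEQ[OF decaying_family.coeff_seq_tendsto[OF ph lim] r] by (simp add: o_def)
    then have "(\<lambda>p. mat_form (M (r p)) (X k) (X k)) \<longlonglongrightarrow> complex_of_real (coeff_seq ph c0 k)"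
      unfolding M(2) by (rule tendsto_of_real)
    then show ?thesis using LIMSEQ_unique limit(5)[OF X] by blast
  qed
  ultimately show "c0 \<in> realisable K X ph m" unfolding realisable_def by blast
qed

lemma realisable_cover:
  assumes K: "scalar_field K" and X: "\<And>k. X k \<in> l2 K" and ph: "decaying_family ph"
    and surj: "\<forall>a :: nat \<Rightarrow> real. summable (\<lambda>k. (a k)\<^sup>2) \<longrightarrow>
               (\<exists>T. hilbert_schmidt K T \<and> (\<forall>k. l2_inner (T (X k)) (X k) = complex_of_real (a k)))"
  shows "\<exists>m. c \<in> realisable K X ph m"
proof -
  have Xs: "square_summable (X k)" for k using X unfolding mem_l2_iff by auto
  obtain T where T: "hilbert_schmidt K T"
    "\<And>k. l2_inner (T (X k)) (X k) = complex_of_real (coeff_seq ph c k)"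
    using surj decaying_family.coeff_seq_square_summable[OF ph, of c] by blast
  define N where "N = op_matrix T"
  have N: "hs_matrix N" "mat_over K N" unfolding N_def using hs_matrix_op_matrix[OF K T(1)] by auto
  have qN: "mat_form N (X k) (X k) = complex_of_real (coeff_seq ph c k)" for k
    using T(2)[of k] hilbert_schmidt_eq_mat_apply[OF K T(1) X] l2_inner_mat_apply[OF N(1) Xs Xs]
    unfolding N_def by simp
  define H where "H = (\<lambda>i j. of_real (1/2) * N i j + of_real (1/2) * mat_adj N i j)"
  have NA: "hs_matrix (mat_adj N)" "mat_over K (mat_adj N)"
    using N hs_matrix_mat_adj_iff scalar_field_closed(6)[OF K] by (auto simp: mat_over_def mat_adj_def)
  have "hs_matrix H" unfolding H_def by (rule hs_matrix_lincomb(1)[OF N(1) NA(1)])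
  moreover have "mat_over K H"
    unfolding H_def
    by (rule mat_over_lincomb[OF K scalar_field_closed(3)[OF K] scalar_field_closed(3)[OF K] N(2) NA(2)])
  moreover have "mat_adj H = H" unfolding H_def mat_adj_def by (auto simp: fun_eq_iff)
  moreover have "hs_normsq H \<le> real (nat \<lceil>hs_normsq H\<rceil>)" by (rule real_nat_ceiling_ge)
  moreover have "mat_form H (X k) (X k) = complex_of_real (coeff_seq ph c k)" for k
    unfolding H_def mat_form_lincomb[OF N(1) NA(1) Xs Xs] cnj_mat_form[symmetric] qN by simp
  ultimately show ?thesis unfolding realisable_def sa_hs_ball_def by blast
qed

lemma Baire_closed_cover:
  fixes F :: "nat \<Rightarrow> 'a::complete_space set"
  assumes "\<And>m. closed (F m)" "\<And>x. \<exists>m. x \<in> F m"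
  obtains m where "interior (F m) \<noteq> {}"
proof (rule ccontr)
  assume "\<not> thesis"
  then have "interior (F m) = {}" for m using that by blast
  then have "euclidean interior_of \<Union>(range F) = {}"
    by (intro Baire_category_alt)
       (use assms(1) in \<open>auto simp: completely_metrizable_space_euclidean\<close>)
  moreover have "\<Union>(range F) = UNIV" using assms(2) by blast
  ultimately show False by simp
qed

text \<open>Up to any precision, the product metric on \<open>nat \<Rightarrow> real\<close> depends on finitely many coordinates.\<close>
lemma ball_contains_far_updates:
  fixes c0 :: "nat \<Rightarrow> real"
  assumes "e > 0" "ball c0 e \<subseteq> S"
  obtains N where "\<And>n v. N \<le> n \<Longrightarrow> c0(n := v) \<in> S"
proof -
  obtain N0 where N0: "(1/2::real)^N0 < e" using real_arch_pow_inv[OF assms(1), of "1/2"] by auto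
  define N where "N = Max (from_nat ` {..N0} :: nat set) + 1"
  have "c0(n := v) \<in> S" if "N \<le> n" for n v
  proof -
    have "(from_nat p :: nat) \<noteq> n" if "p \<le> N0" for p
    proof -
      have "(from_nat p :: nat) \<le> Max (from_nat ` {..N0})" using that by (intro Max_ge) auto
      then show ?thesis using \<open>N \<le> n\<close> unfolding N_def by linarith
    qed
    then have "{dist (c0 (from_nat p)) ((c0(n := v)) (from_nat p)) |p. p \<le> N0} = {0}"
      by auto
    then have "dist c0 (c0(n := v)) \<le> 2 * Max {0} + (1/2)^N0"
      using dist_fun_le_dist_first_terms[of c0 "c0(n := v)" N0] by simp
    then show ?thesis using N0 assms(2) by auto
  qed
  then show ?thesis by (rule that)
qed

lemma realisable_fun_upd_difference:
  assumes K: "scalar_field K" and X: "\<And>k. square_summable (X k)" and ph: "decaying_family ph"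
    and plus: "c(n := 1) \<in> realisable K X ph m" and minus: "c(n := -1) \<in> realisable K X ph m"
  obtains M where "M \<in> sa_hs_ball K (real m)"
    "\<And>k. mat_form M (X k) (X k) = complex_of_real (2^n * ph n k)"
proof -
  obtain Mp Mm where Mp: "Mp \<in> sa_hs_ball K (real m)"
      "\<And>k. mat_form Mp (X k) (X k) = complex_of_real (coeff_seq ph (c(n := 1)) k)"
    and Mm: "Mm \<in> sa_hs_ball K (real m)"
      "\<And>k. mat_form Mm (X k) (X k) = complex_of_real (coeff_seq ph (c(n := -1)) k)"
    using plus minus unfolding realisable_def by blast
  have hs: "hs_matrix Mp" "hs_matrix Mm" using Mp(1) Mm(1) unfolding sa_hs_ball_def by auto
  define M where "M = (\<lambda>i j. of_real (1/2) * Mp i j + of_real (-1/2) * Mm i j)"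
  have "M \<in> sa_hs_ball K (2 * (1/2)^2 * real m + 2 * (-1/2)^2 * real m)"
    unfolding M_def by (rule sa_hs_ball_lincomb[OF K Mp(1) Mm(1)])
  then have "M \<in> sa_hs_ball K (real m)" by (simp add: power2_eq_square)
  moreover have "mat_form M (X k) (X k) = complex_of_real (2^n * ph n k)" for k
    unfolding M_def mat_form_lincomb[OF hs X X] Mp(2) Mm(2)
    using decaying_family.coeff_seq_fun_upd_diff[OF ph, of c n k]
    by (simp flip: of_real_mult of_real_add) (simp add: field_simps)
  ultimately show ?thesis by (rule that)
qed

lemma injective_family_eq_scaled_sym_unit:
  assumes K: "scalar_field K" and inj: "injective_family K X" and X: "\<And>k. square_summable (X k)"
    and jl: "j \<noteq> l" and M: "M \<in> sa_hs_ball K C"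
    and form: "\<And>k. mat_form M (X k) (X k) = complex_of_real (r * pair_form X j l k)"
  shows "M = (\<lambda>a b. of_real r * sym_unit j l a b)"
proof -
  have M': "hs_matrix M" using M unfolding sa_hs_ball_def by auto
  note E = hs_matrix_sym_unit[OF jl] mat_adj_sym_unit
  define D where "D = (\<lambda>a b. of_real 1 * M a b + of_real (- r) * sym_unit j l a b)"
  have "D \<in> sa_hs_ball K (2 * 1^2 * C + 2 * (- r)^2 * 2)"
    unfolding D_def by (rule sa_hs_ball_lincomb[OF K M sym_unit_in_sa_hs_ball[OF K jl]])
  then have D: "hs_matrix D" "mat_adj D = D" "mat_over K D" unfolding sa_hs_ball_def by auto
  have "l2_inner (mat_apply D (X k)) (X k) = 0" for k
  proof -
    have "mat_form (sym_unit j l) (X k) (X k) = of_real (pair_form X j l k)"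
      using mat_form_self_real[OF E(2)] unfolding pair_form_def by simp
    then have "l2_inner (mat_apply D (X k)) (X k)
        = of_real 1 * of_real (r * pair_form X j l k) + of_real (- r) * of_real (pair_form X j l k)"
      unfolding l2_inner_mat_apply[OF D(1) X X] unfolding D_def mat_form_lincomb[OF M' E(1) X X] form
      by simp
    then show ?thesis by simp
  qed
  then have "\<forall>x\<in>l2 K. mat_apply D x = (\<lambda>n. 0)"
    using inj hilbert_schmidt_mat_apply[OF K D(1,3)] self_adjoint_mat_apply[OF D(1,2)]
    unfolding injective_family_def by blast
  then have "D a b = 0" for a b
    using unit_vec_in_l2[OF K, of b] mat_apply_unit_vec[of D b] by metis
  then show ?thesis unfolding D_def by (auto simp: fun_eq_iff)
qed

lemma interior_realisable_empty:
  assumes K: "scalar_field K" and inj: "injective_family K X" and X: "\<And>k. square_summable (X k)"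
    and J: "\<And>n. fst (J n) \<noteq> snd (J n)"
    and ph: "decaying_family (\<lambda>n. pair_form X (fst (J n)) (snd (J n)))"
  shows "interior (realisable K X (\<lambda>n. pair_form X (fst (J n)) (snd (J n))) m) = {}"
proof (rule ccontr)
  let ?ph = "\<lambda>n. pair_form X (fst (J n)) (snd (J n))"
  assume "interior (realisable K X ?ph m) \<noteq> {}"
  then obtain c where "c \<in> interior (realisable K X ?ph m)" by blast
  then obtain e where "e > 0" "ball c e \<subseteq> interior (realisable K X ?ph m)"
    using open_contains_ball[of "interior (realisable K X ?ph m)"] by auto
  then obtain N where far: "\<And>n v. N \<le> n \<Longrightarrow> c(n := v) \<in> realisable K X ?ph m"
    using ball_contains_far_updates[of e c "realisable K X ?ph m"] interior_subset by blast
  define n where "n = max m N"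
  have "N \<le> n" unfolding n_def by simp
  then obtain M where M: "M \<in> sa_hs_ball K (real m)"
      and form: "\<And>k. mat_form M (X k) (X k) = complex_of_real (2^n * ?ph n k)"
    using realisable_fun_upd_difference[OF K X ph far far] by blast
  have "M = (\<lambda>a b. of_real (2^n) * sym_unit (fst (J n)) (snd (J n)) a b)"
    by (rule injective_family_eq_scaled_sym_unit[OF K inj X J M form])
  then have "2 * (2^n)^2 \<le> real m"
    using M hs_normsq_scaled_sym_unit[OF J] unfolding sa_hs_ball_def by (simp add: norm_power)
  moreover have "m < 2^n" using less_exp[of n] unfolding n_def by linarith
  then have "real m < 2^n" by (metis of_nat_less_numeral_power_cancel_iff)
  moreover have "(2::real)^n * 1 \<le> 2^n * 2^n" by (rule mult_left_mono) simp_all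
  ultimately show False by (simp add: power2_eq_square)
qed

theorem mainTheorem18:
  assumes "scalar_field K"
  shows "\<not> (\<exists>X. is_frame K X \<and> injective_family K X \<and>
            (\<forall>a :: nat \<Rightarrow> real. summable (\<lambda>k. (a k)\<^sup>2) \<longrightarrow>
               (\<exists>T. hilbert_schmidt K T \<and>
                    (\<forall>k. l2_inner (T (X k)) (X k) = complex_of_real (a k)))))"
proof
  assume "\<exists>X. is_frame K X \<and> injective_family K X \<and>
            (\<forall>a :: nat \<Rightarrow> real. summable (\<lambda>k. (a k)\<^sup>2) \<longrightarrow>
               (\<exists>T. hilbert_schmidt K T \<and>
                    (\<forall>k. l2_inner (T (X k)) (X k) = complex_of_real (a k))))"
  then obtain X where frame: "is_frame K X" and inj: "injective_family K X"
    and surj: "\<forall>a :: nat \<Rightarrow> real. summable (\<lambda>k. (a k)\<^sup>2) \<longrightarrow>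
               (\<exists>T. hilbert_schmidt K T \<and> (\<forall>k. l2_inner (T (X k)) (X k) = complex_of_real (a k)))"
    by blast
  obtain B where bessel: "bessel_seq K X B" by (rule is_frame_imp_bessel_seq[OF frame])
  have XK: "X k \<in> l2 K" and Xs: "square_summable (X k)" for k
    using bessel_seq_in_l2[OF bessel] unfolding mem_l2_iff by auto
  obtain J where J: "\<And>n. fst (J n) \<noteq> snd (J n)"
    and summable: "\<And>n. summable (\<lambda>k. (pair_form X (fst (J n)) (snd (J n)) k)^2)"
    and bound: "\<And>n. (\<Sum>k. (pair_form X (fst (J n)) (snd (J n)) k)^2) \<le> (1/64)^n"
    using bessel_seq_decaying_pairs[OF bessel assms] by blast
  have ph: "decaying_family (\<lambda>n. pair_form X (fst (J n)) (snd (J n)))"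
    using summable bound by unfold_locales
  obtain m where "interior (realisable K X (\<lambda>n. pair_form X (fst (J n)) (snd (J n))) m) \<noteq> {}"
    by (rule Baire_closed_cover[OF closed_realisable[OF assms Xs ph] realisable_cover[OF assms XK ph surj]])
  then show False using interior_realisable_empty[OF assms inj Xs J ph] by blast
qed

end
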